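(* In the setting described in the context, let $\mathbf W^{[t]}\in\mathbb C^{N_t\times(K+N_s)}$ be such that $\mathbf F(\mathbf W^{[t]})$ is invertible, and let $\bm\Sigma_2^{[t]},\mathbf C_1^{[t]},\mathbf Q^{[t]}$ be the quantities of the context evaluated at $\mathbf W^{[t]}$. Then the gradient of $f$ at $\mathbf W^{[t]}$ is $$\nabla f(\mathbf W)\big|_{\mathbf W=\mathbf W^{[t]}}=2\mathbf C_1^{[t]}+\big(\delta_s\mathbf Q^{[t]}+\delta_s\mathbf Q^{[t]H}-2\delta_c\mathbf H\bm\Sigma_2^{[t]}\mathbf H^H\big)\mathbf W^{[t]}.$$
   Context: Positive integers $N_t,N_r,K,M,L$, nonnegative integer $N_s$; channels $\mathbf h_k\in\mathbb C^{N_t}$, $\mathbf H=[\mathbf h_1,\dots,\mathbf h_K]$, noise variances $\sigma_{ck}^2>0$; $\sigma_s^2>0$; weights $\delta_c,\delta_s\ge0$. $\mathbf W=[\mathbf W_c,\mathbf W_s]\in\mathbb C^{N_t\times(K+N_s)}$, $\mathbf W_c=[\mathbf w_{c1},\dots,\mathbf w_{cK}]$, $\mathbf R_x=\mathbf W\mathbf W^H$. Rate $R_k(\mathbf W)=\log(1+|\mathbf h_k^H\mathbf w_{ck}|^2/I_k)$ with $I_k=\sum_{j\ne k}|\mathbf h_k^H\mathbf w_{cj}|^2+\|\mathbf h_k^H\mathbf W_s\|_F^2+\sigma_{ck}^2$. Sensing model: differentiable $\mathbf a:\mathbb R^2\to\mathbb C^{N_t}$, $\mathbf b:\mathbb R^2\to\mathbb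 C^{N_r}$; parameters $\theta_m,\phi_m\in\mathbb R,\alpha_m\in\mathbb C$; $\mathbf A=[\mathbf a(\theta_m,\phi_m)]_m$, $\mathbf B=[\mathbf b(\theta_m,\phi_m)]_m$, $\mathbf U=\mathrm{diag}(\alpha_m)$; $\dot{\mathbf A}_\theta,\dot{\mathbf A}_\phi,\dot{\mathbf B}_\theta,\dot{\mathbf B}_\phi$ have $m$-th columns the partial derivatives of $\mathbf a$ resp. $\mathbf b$ w.r.t. first resp. second argument at $(\theta_m,\phi_m)$. $\mathbf F(\mathbf W)=\frac{2L}{\sigma_s^2}\begin{bmatrix}\Re\mathbf F_{11}&\Re\mathbf F_{12}&\Re\mathbf F_{13}&-\Im\mathbf F_{13}\\ \Re\mathbf F_{12}^{\mathsf T}&\Re\mathbf F_{22}&\Re\mathbf F_{23}&-\Im\mathbf F_{23}\\ \Re\mathbf F_{13}^{\mathsf T}&\Re\mathbf F_{23}^{\mathsf T}&\Re\mathbf F_{33}&-\Im\mathbf F_{33}\\ -\Im\mathbf F_{13}^{\mathsf T}&-\Im\mathbf F_{23}^{\mathsf T}&-\Im\mathbf F_{33}^{\mathsf T}&\Re\mathbf F_{33}\end{bmatrix}$ with $\mathbf F_{11}=(\mathbf U\mathbf A^H\mathbf R_x\mathbf A\mathbf U^H)^{\mathsf T}\odot(\dot{\mathbf B}_\theta^H\dot{\mathbf B}_\theta)+(\mathbf U\mathbf A^H\mathbf R_x\dot{\mathbf A}_\theta\mathbf U^H)^{\mathsf T}\odot(\mathbf B^H\dot{\mathbf B}_\theta)+(\mathbf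 U\dot{\mathbf A}_\theta^H\mathbf R_x\mathbf A\mathbf U^H)^{\mathsf T}\odot(\dot{\mathbf B}_\theta^H\mathbf B)+(\mathbf U\dot{\mathbf A}_\theta^H\mathbf R_x\dot{\mathbf A}_\theta\mathbf U^H)^{\mathsf T}\odot(\mathbf B^H\mathbf B)$; $\mathbf F_{12}=(\mathbf U\mathbf A^H\mathbf R_x\mathbf A\mathbf U^H)^{\mathsf T}\odot(\dot{\mathbf B}_\theta^H\dot{\mathbf B}_\phi)+(\mathbf U\mathbf A^H\mathbf R_x\dot{\mathbf A}_\theta\mathbf U^H)^{\mathsf T}\odot(\mathbf B^H\dot{\mathbf B}_\phi)+(\mathbf U\dot{\mathbf A}_\phi^H\mathbf R_x\mathbf A\mathbf U^H)^{\mathsf T}\odot(\dot{\mathbf B}_\theta^H\mathbf B)+(\mathbf U\dot{\mathbf A}_\phi^H\mathbf R_x\dot{\mathbf A}_\theta\mathbf U^H)^{\mathsf T}\odot(\mathbf B^H\mathbf B)$; $\mathbf F_{22}$ = $\mathbf F_{11}$ with $\theta$ replaced by $\phi$; $\mathbf F_{13}=(\mathbf A^H\mathbf R_x\mathbf A\mathbf U^H)^{\mathsf T}\odot(\dot{\mathbf B}_\theta^H\mathbf B)+(\mathbf A^H\mathbf R_x\dot{\mathbf A}_\theta\mathbf U^H)^{\mathsf T}\odot(\mathbf B^H\mathbf B)$; $\mathbf F_{23}$ = $\mathbf F_{13}$ with $\theta$ replaced by $\phi$; $\mathbf F_{33}=(\mathbf A^H\mathbf R_x\mathbf A)^{\mathsf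 T}\odot(\mathbf B^H\mathbf B)$ ($\odot$ Hadamard). $f(\mathbf W)=\delta_c\sum_kR_k(\mathbf W)-\delta_s\mathrm{tr}(\mathbf F(\mathbf W)^{-1})$. Gradient convention: for real-valued $g$ of complex matrix $\mathbf W$, $\nabla g=\partial g/\partial\Re\mathbf W+\mathrm j\,\partial g/\partial\Im\mathbf W$ ($\mathrm j$ imaginary unit). Quantities at $\mathbf W$: $T_k=I_k+|\mathbf h_k^H\mathbf w_{ck}|^2$, $\xi_k=|\mathbf h_k^H\mathbf w_{ck}|^2/I_k$, $\eta_k=\overline{\mathbf h_k^H\mathbf w_{ck}}/I_k$, $\beta_k=\xi_k/T_k$, $\bm\Sigma_1=\mathrm{diag}(\eta_k)$, $\bm\Sigma_2=\mathrm{diag}(\beta_k)$, $\mathbf C_1=[\delta_c\mathbf H\bm\Sigma_1^H,\mathbf 0_{N_t\times N_s}]$. $\bm\Phi=\mathbf F(\mathbf W)^{-2}$ partitioned into $M\times M$ blocks $\bm\Phi_{pq}$; $\mathbf Q_{11}=\mathbf A\mathbf U^H(\bm\Phi_{11}\odot\dot{\mathbf B}_\theta^H\dot{\mathbf B}_\theta)\mathbf U\mathbf A^H+\dot{\mathbf A}_\theta\mathbf U^H(\bm\Phi_{11}\odot\mathbf B^H\dot{\mathbf B}_\theta)\mathbf U\mathbf A^H+\mathbf A\mathbf U^H(\bm\Phi_{11}\odot\dot{\mathbf B}_\theta^H\mathbf B)\mathbf U\dot{\mathbf A}_\theta^H+\dot{\mathbf A}_\theta\mathbf U^H(\bm\Phi_{11}\odot\mathbf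 B^H\mathbf B)\mathbf U\dot{\mathbf A}_\theta^H$; $\mathbf Q_{12}=2[\mathbf A\mathbf U^H(\bm\Phi_{12}\odot\dot{\mathbf B}_\theta^H\dot{\mathbf B}_\phi)\mathbf U\mathbf A^H+\dot{\mathbf A}_\theta\mathbf U^H(\bm\Phi_{12}\odot\mathbf B^H\dot{\mathbf B}_\phi)\mathbf U\mathbf A^H+\mathbf A\mathbf U^H(\bm\Phi_{12}\odot\dot{\mathbf B}_\theta^H\mathbf B)\mathbf U\dot{\mathbf A}_\phi^H+\dot{\mathbf A}_\theta\mathbf U^H(\bm\Phi_{12}\odot\mathbf B^H\mathbf B)\mathbf U\dot{\mathbf A}_\phi^H]$; $\mathbf Q_{22}$ = $\mathbf Q_{11}$ with $\bm\Phi_{11}\to\bm\Phi_{22}$, $\theta\to\phi$; $\mathbf Q_{13}=\mathbf A\mathbf U^H((2\bm\Phi_{13}+2\mathrm j\bm\Phi_{14})\odot\dot{\mathbf B}_\theta^H\mathbf B)\mathbf A^H+\dot{\mathbf A}_\theta\mathbf U^H((2\bm\Phi_{13}+2\mathrm j\bm\Phi_{14})\odot\mathbf B^H\mathbf B)\mathbf A^H$; $\mathbf Q_{23}$ = $\mathbf Q_{13}$ with $\bm\Phi_{13},\bm\Phi_{14}\to\bm\Phi_{23},\bm\Phi_{24}$ and $\theta\to\phi$; $\mathbf Q_{33}=\mathbf A((\bm\Phi_{33}+\bm\Phi_{44}+2\mathrm j\bm\Phi_{34})\odot\mathbf B^H\mathbf B)\mathbf A^H$; $\mathbf Q=\frac{2L}{\sigma_s^2}(\mathbf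 Q_{11}+\mathbf Q_{12}+\mathbf Q_{13}+\mathbf Q_{22}+\mathbf Q_{23}+\mathbf Q_{33})$. *)

theory Defs
  imports "Jordan_Normal_Form.Schur_Decomposition" "Jordan_Normal_Form.Gauss_Jordan_Elimination"
    "HOL-Analysis.Derivative"
begin

definition hadamard :: "'a::times mat \<Rightarrow> 'a mat \<Rightarrow> 'a mat" (infixl "\<odot>" 70) where
  "hadamard X Y = Matrix.mat (dim_row X) (dim_col X) (\<lambda>(i,j). X $$ (i,j) * Y $$ (i,j))"

definition mtrace :: "'a::comm_ring_1 mat \<Rightarrow> 'a" where
  "mtrace X = (\<Sum>i<dim_row X. X $$ (i,i))"

definition re_mat :: "complex mat \<Rightarrow> real mat" where "re_mat X = map_mat Re X"
definition im_mat :: "complex mat \<Rightarrow> real mat" where "im_mat X = map_mat Im X"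
definition cmat :: "real mat \<Rightarrow> complex mat" where "cmat X = map_mat complex_of_real X"

definition minv :: "'a::field mat \<Rightarrow> 'a mat" where "minv X = the (mat_inverse X)"

text \<open>4x4 block matrix with M x M blocks, blocks indexed 0..3 (paper: 1..4).\<close>
definition block4 :: "nat \<Rightarrow> (nat \<Rightarrow> nat \<Rightarrow> 'a mat) \<Rightarrow> 'a mat" where
  "block4 M Bl = Matrix.mat (4*M) (4*M) (\<lambda>(i,j). Bl (i div M) (j div M) $$ (i mod M, j mod M))"

definition blk :: "nat \<Rightarrow> 'a mat \<Rightarrow> nat \<Rightarrow> nat \<Rightarrow> 'a mat" where
  "blk M X p q = Matrix.mat M M (\<lambda>(i,j). X $$ (p*M+i, q*M+j))"

definition pert :: "complex mat \<Rightarrow> nat \<Rightarrow> nat \<Rightarrow> complex \<Rightarrow> complex mat" where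
  "pert X i j c = Matrix.mat (dim_row X) (dim_col X) (\<lambda>(a,b). if a = i \<and> b = j then X $$ (a,b) + c else X $$ (a,b))"

text \<open>nabla g(W) = dg/dRe W + j dg/dIm W (entrywise partial derivatives).\<close>
definition has_gradient :: "(complex mat \<Rightarrow> real) \<Rightarrow> complex mat \<Rightarrow> complex mat \<Rightarrow> bool" where
  "has_gradient g X G \<longleftrightarrow> G \<in> carrier_mat (dim_row X) (dim_col X) \<and>
     (\<forall>i<dim_row X. \<forall>j<dim_col X.
        ((\<lambda>t. g (pert X i j (complex_of_real t))) has_real_derivative Re (G $$ (i,j))) (at 0) \<and>
        ((\<lambda>t. g (pert X i j (\<i> * complex_of_real t))) has_real_derivative Im (G $$ (i,j))) (at 0))"

record sens =
  Am :: "complex mat"  dAth :: "complex mat"  dAph :: "complex mat"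
  Bm :: "complex mat"  dBth :: "complex mat"  dBph :: "complex mat"
  Um :: "complex mat"

definition mk_sens :: "nat \<Rightarrow> nat \<Rightarrow> nat \<Rightarrow> (real \<Rightarrow> real \<Rightarrow> nat \<Rightarrow> complex) \<Rightarrow>
   (real \<Rightarrow> real \<Rightarrow> nat \<Rightarrow> complex) \<Rightarrow> (nat \<Rightarrow> real) \<Rightarrow> (nat \<Rightarrow> real) \<Rightarrow> (nat \<Rightarrow> complex) \<Rightarrow> sens" where
  "mk_sens Nt Nr M a b th ph al = \<lparr>
     Am = Matrix.mat Nt M (\<lambda>(i,m). a (th m) (ph m) i),
     dAth = Matrix.mat Nt M (\<lambda>(i,m). vector_derivative (\<lambda>x. a x (ph m) i) (at (th m))),
     dAph = Matrix.mat Nt M (\<lambda>(i,m). vector_derivative (\<lambda>y. a (th m) y i) (at (ph m))),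
     Bm = Matrix.mat Nr M (\<lambda>(i,m). b (th m) (ph m) i),
     dBth = Matrix.mat Nr M (\<lambda>(i,m). vector_derivative (\<lambda>x. b x (ph m) i) (at (th m))),
     dBph = Matrix.mat Nr M (\<lambda>(i,m). vector_derivative (\<lambda>y. b (th m) y i) (at (ph m))),
     Um = mat_diag M al \<rparr>"

abbreviation (input) adj :: "complex mat \<Rightarrow> complex mat" where "adj \<equiv> mat_adjoint"
abbreviation (input) tr :: "complex mat \<Rightarrow> complex mat" where "tr \<equiv> transpose_mat"

definition Fab :: "sens \<Rightarrow> complex mat \<Rightarrow> complex mat \<Rightarrow> complex mat \<Rightarrow> complex mat \<Rightarrow> complex mat \<Rightarrow> complex mat" where
  "Fab S R dA1 dB1 dA2 dB2 = (let A = Am S; B = Bm S; U = Um S in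
      tr (U * adj A * R * A * adj U) \<odot> (adj dB1 * dB2)
    + tr (U * adj A * R * dA1 * adj U) \<odot> (adj B * dB2)
    + tr (U * adj dA2 * R * A * adj U) \<odot> (adj dB1 * B)
    + tr (U * adj dA2 * R * dA1 * adj U) \<odot> (adj B * B))"

definition F3 :: "sens \<Rightarrow> complex mat \<Rightarrow> complex mat \<Rightarrow> complex mat \<Rightarrow> complex mat" where
  "F3 S R dA dB = (let A = Am S; B = Bm S; U = Um S in
      tr (adj A * R * A * adj U) \<odot> (adj dB * B)
    + tr (adj A * R * dA * adj U) \<odot> (adj B * B))"

definition F33 :: "sens \<Rightarrow> complex mat \<Rightarrow> complex mat" where
  "F33 S R = tr (adj (Am S) * R * Am S) \<odot> (adj (Bm S) * Bm S)"

definition fisher :: "nat \<Rightarrow> nat \<Rightarrow> real \<Rightarrow> sens \<Rightarrow> complex mat \<Rightarrow> real mat" where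
  "fisher M L s2s S W = (let R = W * adj W;
      F11 = Fab S R (dAth S) (dBth S) (dAth S) (dBth S);
      F12 = Fab S R (dAth S) (dBth S) (dAph S) (dBph S);
      F22 = Fab S R (dAph S) (dBph S) (dAph S) (dBph S);
      F13 = F3 S R (dAth S) (dBth S);
      F23 = F3 S R (dAph S) (dBph S);
      G = F33 S R;
      Bl = (\<lambda>p q. [[re_mat F11, re_mat F12, re_mat F13, - im_mat F13],
                   [re_mat (tr F12), re_mat F22, re_mat F23, - im_mat F23],
                   [re_mat (tr F13), re_mat (tr F23), re_mat G, - im_mat G],
                   [- im_mat (tr F13), - im_mat (tr F23), - im_mat (tr G), re_mat G]] ! p ! q)
    in (2 * real L / s2s) \<cdot>\<^sub>m block4 M Bl)"

definition hw :: "complex mat \<Rightarrow> complex mat \<Rightarrow> nat \<Rightarrow> nat \<Rightarrow> complex" where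
  "hw H W k j = (adj H * W) $$ (k,j)"

definition interf :: "nat \<Rightarrow> nat \<Rightarrow> complex mat \<Rightarrow> (nat \<Rightarrow> real) \<Rightarrow> complex mat \<Rightarrow> nat \<Rightarrow> real" where
  "interf K Ns H s2c W k = (\<Sum>j\<in>{..<K} - {k}. (cmod (hw H W k j))\<^sup>2)
      + (\<Sum>j<Ns. (cmod (hw H W k (K + j)))\<^sup>2) + s2c k"

definition rate :: "nat \<Rightarrow> nat \<Rightarrow> complex mat \<Rightarrow> (nat \<Rightarrow> real) \<Rightarrow> complex mat \<Rightarrow> nat \<Rightarrow> real" where
  "rate K Ns H s2c W k = ln (1 + (cmod (hw H W k k))\<^sup>2 / interf K Ns H s2c W k)"

definition objective :: "nat \<Rightarrow> nat \<Rightarrow> nat \<Rightarrow> nat \<Rightarrow> complex mat \<Rightarrow> (nat \<Rightarrow> real) \<Rightarrow> real \<Rightarrow> sens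
    \<Rightarrow> real \<Rightarrow> real \<Rightarrow> complex mat \<Rightarrow> real" where
  "objective K Ns M L H s2c s2s S dc ds W =
     dc * (\<Sum>k<K. rate K Ns H s2c W k) - ds * mtrace (minv (fisher M L s2s S W))"

definition Qab :: "sens \<Rightarrow> complex mat \<Rightarrow> complex mat \<Rightarrow> complex mat \<Rightarrow> complex mat \<Rightarrow> complex mat \<Rightarrow> complex mat" where
  "Qab S P dA1 dB1 dA2 dB2 = (let A = Am S; B = Bm S; U = Um S in
      A * adj U * (P \<odot> (adj dB1 * dB2)) * U * adj A
    + dA1 * adj U * (P \<odot> (adj B * dB2)) * U * adj A
    + A * adj U * (P \<odot> (adj dB1 * B)) * U * adj dA2
    + dA1 * adj U * (P \<odot> (adj B * B)) * U * adj dA2)"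

definition Q3 :: "sens \<Rightarrow> complex mat \<Rightarrow> complex mat \<Rightarrow> complex mat \<Rightarrow> complex mat" where
  "Q3 S P dA dB = (let A = Am S; B = Bm S; U = Um S in
      A * adj U * (P \<odot> (adj dB * B)) * adj A
    + dA * adj U * (P \<odot> (adj B * B)) * adj A)"

definition Qmat :: "nat \<Rightarrow> nat \<Rightarrow> real \<Rightarrow> sens \<Rightarrow> complex mat \<Rightarrow> complex mat" where
  "Qmat M L s2s S W = (let Fm = fisher M L s2s S W; Phi = minv Fm * minv Fm;
      P = (\<lambda>p q. cmat (blk M Phi p q));
      Q11 = Qab S (P 0 0) (dAth S) (dBth S) (dAth S) (dBth S);
      Q12 = (2::complex) \<cdot>\<^sub>m Qab S (P 0 1) (dAth S) (dBth S) (dAph S) (dBph S);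
      Q22 = Qab S (P 1 1) (dAph S) (dBph S) (dAph S) (dBph S);
      Q13 = Q3 S ((2::complex) \<cdot>\<^sub>m P 0 2 + (2 * \<i>) \<cdot>\<^sub>m P 0 3) (dAth S) (dBth S);
      Q23 = Q3 S ((2::complex) \<cdot>\<^sub>m P 1 2 + (2 * \<i>) \<cdot>\<^sub>m P 1 3) (dAph S) (dBph S);
      Q33 = Am S * ((P 2 2 + P 3 3 + (2 * \<i>) \<cdot>\<^sub>m P 2 3) \<odot> (adj (Bm S) * Bm S)) * adj (Am S)
    in complex_of_real (2 * real L / s2s) \<cdot>\<^sub>m (Q11 + Q12 + Q13 + Q22 + Q23 + Q33))"

definition grad_formula :: "nat \<Rightarrow> nat \<Rightarrow> nat \<Rightarrow> nat \<Rightarrow> nat \<Rightarrow> complex mat \<Rightarrow> (nat \<Rightarrow> real) \<Rightarrow> real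
    \<Rightarrow> sens \<Rightarrow> real \<Rightarrow> real \<Rightarrow> complex mat \<Rightarrow> complex mat" where
  "grad_formula Nt K Ns M L H s2c s2s S dc ds W = (let
      I = interf K Ns H s2c W;
      T = (\<lambda>k. I k + (cmod (hw H W k k))\<^sup>2);
      xi = (\<lambda>k. (cmod (hw H W k k))\<^sup>2 / I k);
      eta = (\<lambda>k. cnj (hw H W k k) / complex_of_real (I k));
      beta = (\<lambda>k. xi k / T k);
      Sig1 = mat_diag K eta;
      Sig2 = mat_diag K (\<lambda>k. complex_of_real (beta k));
      C1 = four_block_mat (complex_of_real dc \<cdot>\<^sub>m (H * adj Sig1)) (0\<^sub>m Nt Ns) (0\<^sub>m 0 K) (0\<^sub>m 0 Ns);
      Q = Qmat M L s2s S W
    in (2::complex) \<cdot>\<^sub>m C1 + (complex_of_real ds \<cdot>\<^sub>m Q + complex_of_real ds \<cdot>\<^sub>m adj Q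
          - complex_of_real (2 * dc) \<cdot>\<^sub>m (H * Sig2 * adj H)) * W)"

end

(*
  The gradient is read off entrywise from directional derivatives along W + t E, where E has the
  single nonzero entry c at (i,j): c = 1 and c = sqrt(-1) give the partial derivatives along Re W_ij
  and Im W_ij, and both are Re (conj c * G_ij).

  Communication: the k-th rate is ln T_k - ln I_k, with T_k and I_k quadratic in t, so its
  derivative is a rational function of the h_k^H w_l; collecting terms over k gives the entry (i,j)
  of 2 C_1 - 2 delta_c H Sigma_2 H^H W.

  Sensing: R_x(t) = R_x + t X + t^2 E E^H with X = E W^H + W E^H, and F is real-linear in R_x, so
  the derivative of tr F^-1 is -tr (F^-1 F(X) F^-1) = -tr (Phi F(X)) with Phi = F^-2. Every block
  of F(X) is a sum of Hadamard products (U A^H X A U^H)^T o (B^H B) and the like, and the identity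
  tr (Y (P o C) Z X) = sum (P o (Z X Y)^T o C) moves the block Phi_pq of Phi over to the precoder
  side. Since F, hence Phi, is symmetric, lower blocks fold onto upper ones, and the result is
  Re tr (Q X) = Re (conj c * ((Q + Q^H) W)_ij).
*)
theory Submission
  imports Defs
begin

lemma mat_adjoint_eq:
  "mat_adjoint (A::complex mat) = Matrix.mat (dim_col A) (dim_row A) (\<lambda>(i,j). cnj (A $$ (j,i)))"
  by (rule eq_matI) (auto simp: mat_adjoint_def mat_of_rows_def)

lemma mat_adjoint_dims [simp]:
  "dim_row (mat_adjoint (A::complex mat)) = dim_col A" "dim_col (mat_adjoint A) = dim_row A"
  by (simp_all add: mat_adjoint_eq)

lemma mat_adjoint_carrier [simp]: "(A::complex mat) \<in> carrier_mat n m \<Longrightarrow> mat_adjoint A \<in> carrier_mat m n"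
  by (simp add: mat_adjoint_eq)

lemma index_mat_adjoint [simp]:
  "i < dim_col A \<Longrightarrow> j < dim_row A \<Longrightarrow> mat_adjoint (A::complex mat) $$ (i,j) = cnj (A $$ (j,i))"
  by (simp add: mat_adjoint_eq)

lemma mat_adjoint_mat_adjoint [simp]: "mat_adjoint (mat_adjoint (A::complex mat)) = A"
  by (rule eq_matI) auto

lemma mat_adjoint_mult:
  "dim_col (A::complex mat) = dim_row B \<Longrightarrow> mat_adjoint (A * B) = mat_adjoint B * mat_adjoint A"
  by (rule eq_matI) (auto simp: scalar_prod_def mult.commute)

lemma mat_adjoint_add:
  "dim_row (A::complex mat) = dim_row B \<Longrightarrow> dim_col A = dim_col B \<Longrightarrow>
   mat_adjoint (A + B) = mat_adjoint A + mat_adjoint B"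
  by (rule eq_matI) auto

lemma mat_adjoint_smult: "mat_adjoint (c \<cdot>\<^sub>m (A::complex mat)) = cnj c \<cdot>\<^sub>m mat_adjoint A"
  by (rule eq_matI) auto

lemma mat_adjoint_mat_diag: "mat_adjoint (mat_diag n f) = mat_diag n (\<lambda>k. cnj (f k))"
  by (rule eq_matI) (auto simp: mat_diag_def)

lemma mat_diag_dims [simp]: "dim_row (mat_diag n f) = n" "dim_col (mat_diag n f) = n"
  by (simp_all add: mat_diag_def)

lemma assoc_mult_mat_dim:
  "dim_col A = dim_row B \<Longrightarrow> dim_col B = dim_row C \<Longrightarrow> (A * B) * (C::'a::semiring_0 mat) = A * (B * C)"
  by (rule assoc_mult_mat[of A "dim_row A" "dim_col A" B "dim_col B" C "dim_col C"]) auto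

lemma add_mult_distrib_mat_dim:
  "dim_row A = dim_row B \<Longrightarrow> dim_col A = dim_col B \<Longrightarrow> dim_col A = dim_row C \<Longrightarrow>
   (A + B) * (C::'a::semiring_0 mat) = A * C + B * C"
  by (rule add_mult_distrib_mat[of A "dim_row A" "dim_col A" B C "dim_col C"]) auto

lemma mult_add_distrib_mat_dim:
  "dim_row B = dim_row C \<Longrightarrow> dim_col B = dim_col C \<Longrightarrow> dim_col A = dim_row B \<Longrightarrow>
   (A::'a::semiring_0 mat) * (B + C) = A * B + A * C"
  by (rule mult_add_distrib_mat[of A "dim_row A" "dim_col A" B "dim_col B" C]) auto

lemma minus_mult_distrib_mat_dim:
  "dim_row A = dim_row B \<Longrightarrow> dim_col A = dim_col B \<Longrightarrow> dim_col A = dim_row C \<Longrightarrow>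
   (A - B) * (C::'a::ring mat) = A * C - B * C"
  by (rule minus_mult_distrib_mat[of A "dim_row A" "dim_col A" B C "dim_col C"]) auto

lemma smult_mult_mat_dim:
  "dim_col A = dim_row B \<Longrightarrow> (c \<cdot>\<^sub>m (A::'a::comm_ring_1 mat)) * B = c \<cdot>\<^sub>m (A * B)"
  by (rule eq_matI) (auto simp: scalar_prod_def sum_distrib_left ac_simps)

lemma mult_smult_mat_dim:
  "dim_col A = dim_row B \<Longrightarrow> (A::'a::comm_ring_1 mat) * (c \<cdot>\<^sub>m B) = c \<cdot>\<^sub>m (A * B)"
  by (rule eq_matI) (auto simp: scalar_prod_def sum_distrib_left ac_simps)

lemma mtrace_mult_comm:
  assumes "(A::'a::comm_ring_1 mat) \<in> carrier_mat n m" "B \<in> carrier_mat m n"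
  shows "mtrace (A * B) = mtrace (B * A)"
proof -
  have "mtrace (A * B) = (\<Sum>i<n. \<Sum>k<m. A $$ (i,k) * B $$ (k,i))"
    using assms by (simp add: mtrace_def scalar_prod_def atLeast0LessThan)
  also have "\<dots> = (\<Sum>k<m. \<Sum>i<n. B $$ (k,i) * A $$ (i,k))"
    by (subst sum.swap) (simp add: mult.commute)
  also have "\<dots> = mtrace (B * A)"
    using assms by (simp add: mtrace_def scalar_prod_def atLeast0LessThan)
  finally show ?thesis .
qed

lemma mtrace_add:
  "dim_row A = dim_col A \<Longrightarrow> dim_row B = dim_row A \<Longrightarrow> dim_col B = dim_col A \<Longrightarrow>
   mtrace (A + B) = mtrace A + mtrace (B::'a::comm_ring_1 mat)"
  by (simp add: mtrace_def sum.distrib)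

lemma mtrace_smult: "dim_row A = dim_col A \<Longrightarrow> mtrace (c \<cdot>\<^sub>m (A::'a::comm_ring_1 mat)) = c * mtrace A"
  by (simp add: mtrace_def sum_distrib_left)

lemma mtrace_mat_adjoint: "dim_row A = dim_col A \<Longrightarrow> mtrace (mat_adjoint (A::complex mat)) = cnj (mtrace A)"
  by (simp add: mtrace_def)

lemma index_hadamard [simp]:
  "i < dim_row X \<Longrightarrow> j < dim_col X \<Longrightarrow> (X \<odot> Y) $$ (i,j) = X $$ (i,j) * Y $$ (i,j)"
  by (simp add: hadamard_def)

lemma hadamard_dims [simp]: "dim_row (X \<odot> Y) = dim_row X" "dim_col (X \<odot> Y) = dim_col X"
  by (simp_all add: hadamard_def)

lemma hadamard_carrier [simp]: "X \<in> carrier_mat n m \<Longrightarrow> X \<odot> Y \<in> carrier_mat n m"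
  by (simp add: hadamard_def)

definition entry_pairing :: "nat \<Rightarrow> 'a::comm_ring_1 mat \<Rightarrow> 'a mat \<Rightarrow> 'a" where
  "entry_pairing M P F = (\<Sum>x<M. \<Sum>y<M. P $$ (x,y) * F $$ (x,y))"

lemma entry_pairing_add:
  "dim_row F = M \<Longrightarrow> dim_col F = M \<Longrightarrow> dim_row G = M \<Longrightarrow> dim_col G = M \<Longrightarrow>
   entry_pairing M P (F + G) = entry_pairing M P F + entry_pairing M P G"
  by (simp add: entry_pairing_def sum.distrib algebra_simps)

lemma entry_pairing_uminus:
  "dim_row F = M \<Longrightarrow> dim_col F = M \<Longrightarrow> entry_pairing M P (- F) = - entry_pairing M P F"
  by (simp add: entry_pairing_def sum_negf)

lemma entry_pairing_transpose:
  "dim_row P = M \<Longrightarrow> dim_col P = M \<Longrightarrow> dim_row F = M \<Longrightarrow> dim_col F = M \<Longrightarrow>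
   entry_pairing M P\<^sup>T F\<^sup>T = entry_pairing M P F"
  unfolding entry_pairing_def by (subst sum.swap) simp

text \<open>This identity turns derivatives of the Fisher blocks into the matrices \<open>Q\<^sub>p\<^sub>q\<close>.\<close>
lemma mtrace_mult_hadamard:
  assumes Y: "(Y::complex mat) \<in> carrier_mat n M" and P: "P \<in> carrier_mat M M" and C: "C \<in> carrier_mat M M"
    and Z: "Z \<in> carrier_mat M n" and X: "X \<in> carrier_mat n n"
  shows "mtrace (Y * (P \<odot> C) * Z * X) = entry_pairing M P ((Z * X * Y)\<^sup>T \<odot> C)"
proof -
  have "Y * (P \<odot> C) * Z * X = Y * ((P \<odot> C) * Z * X)"
    using assms by (simp add: assoc_mult_mat_dim)
  moreover have "(P \<odot> C) * Z * X \<in> carrier_mat M n"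
    using assms by (metis hadamard_carrier mult_carrier_mat)
  ultimately have "mtrace (Y * (P \<odot> C) * Z * X) = mtrace (((P \<odot> C) * Z * X) * Y)"
    using mtrace_mult_comm[OF Y] by simp
  also have "((P \<odot> C) * Z * X) * Y = (P \<odot> C) * (Z * X * Y)"
    using assms by (simp add: assoc_mult_mat_dim)
  also have "mtrace \<dots> = entry_pairing M P ((Z * X * Y)\<^sup>T \<odot> C)"
    using assms by (simp add: mtrace_def entry_pairing_def scalar_prod_def atLeast0LessThan ac_simps)
  finally show ?thesis .
qed

lemma index_re_mat [simp]: "i < dim_row X \<Longrightarrow> j < dim_col X \<Longrightarrow> re_mat X $$ (i,j) = Re (X $$ (i,j))"
  by (simp add: re_mat_def)

lemma index_im_mat [simp]: "i < dim_row X \<Longrightarrow> j < dim_col X \<Longrightarrow> im_mat X $$ (i,j) = Im (X $$ (i,j))"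
  by (simp add: im_mat_def)

lemma re_im_mat_dims [simp]:
  "dim_row (re_mat X) = dim_row X" "dim_col (re_mat X) = dim_col X"
  "dim_row (im_mat X) = dim_row X" "dim_col (im_mat X) = dim_col X"
  by (simp_all add: re_mat_def im_mat_def)

lemma index_cmat [simp]: "i < dim_row X \<Longrightarrow> j < dim_col X \<Longrightarrow> cmat X $$ (i,j) = complex_of_real (X $$ (i,j))"
  by (simp add: cmat_def)

lemma cmat_dims [simp]: "dim_row (cmat X) = dim_row X" "dim_col (cmat X) = dim_col X"
  by (simp_all add: cmat_def)

lemma index_blk [simp]: "i < M \<Longrightarrow> j < M \<Longrightarrow> blk M X p q $$ (i,j) = X $$ (p*M+i, q*M+j)"
  by (simp add: blk_def)

lemma blk_dims [simp]: "dim_row (blk M X p q) = M" "dim_col (blk M X p q) = M"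
  by (simp_all add: blk_def)

lemma block4_dims [simp]: "dim_row (block4 M Bl) = 4*M" "dim_col (block4 M Bl) = 4*M"
  by (simp_all add: block4_def)

lemma index_block4:
  "i < 4*M \<Longrightarrow> j < 4*M \<Longrightarrow> block4 M Bl $$ (i,j) = Bl (i div M) (j div M) $$ (i mod M, j mod M)"
  by (simp add: block4_def)

lemma block_index_less: "p < k \<Longrightarrow> (x::nat) < M \<Longrightarrow> p*M + x < k*M"
proof -
  assume "p < k" "x < M"
  then have "p*M + x < Suc p * M" by simp
  also have "\<dots> \<le> k * M" using \<open>p < k\<close> by (intro mult_right_mono) auto
  finally show ?thesis .
qed

lemma sum_lessThan_mult: "(\<Sum>a<k*M. f a) = (\<Sum>p<k. \<Sum>x<M. f (p*M + x))" for k M :: nat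
proof (induction k)
  case (Suc k)
  have "(\<Sum>a<n+m. f a) = (\<Sum>a<n. f a) + (\<Sum>x<m. f (n+x))" for n m
    by (induction m) (simp_all add: add_ac)
  from this[of "k*M" M] show ?case using Suc by (simp add: add.commute)
qed simp

lemma symmetric_mat_index:
  "A\<^sup>T = A \<Longrightarrow> A \<in> carrier_mat n n \<Longrightarrow> i < n \<Longrightarrow> j < n \<Longrightarrow> A $$ (i,j) = A $$ (j,i)"
  by (metis carrier_matD index_transpose_mat(1))

lemma transpose_blk:
  assumes "Phi \<in> carrier_mat (4*M) (4*M)" "Phi\<^sup>T = Phi" "p < 4" "q < 4"
  shows "(blk M Phi p q)\<^sup>T = blk M Phi q p"
proof (rule eq_matI)
  fix x y assume "x < dim_row (blk M Phi q p)" "y < dim_col (blk M Phi q p)"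
  then show "(blk M Phi p q)\<^sup>T $$ (x, y) = blk M Phi q p $$ (x, y)"
    using assms block_index_less[of p 4 y M] block_index_less[of q 4 x M]
    by (simp add: symmetric_mat_index[OF assms(2,1)])
qed simp_all

lemma mtrace_mult_block4:
  assumes Phi: "(Phi::'a::comm_ring_1 mat) \<in> carrier_mat (4*M) (4*M)"
    and Bl: "\<And>p q. p < 4 \<Longrightarrow> q < 4 \<Longrightarrow> Bl p q \<in> carrier_mat M M"
  shows "mtrace (Phi * block4 M Bl) = (\<Sum>p<4. \<Sum>q<4. entry_pairing M (blk M Phi p q) (Bl q p)\<^sup>T)"
proof -
  have "mtrace (Phi * block4 M Bl) = (\<Sum>a<4*M. \<Sum>b<4*M. Phi $$ (a,b) * block4 M Bl $$ (b,a))"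
    using Phi by (simp add: mtrace_def scalar_prod_def atLeast0LessThan)
  also have "\<dots> = (\<Sum>p<4. \<Sum>x<M. \<Sum>q<4. \<Sum>y<M. Phi $$ (p*M+x, q*M+y) * block4 M Bl $$ (q*M+y, p*M+x))"
    by (simp add: sum_lessThan_mult)
  also have "\<dots> = (\<Sum>p<4. \<Sum>q<4. \<Sum>x<M. \<Sum>y<M. Phi $$ (p*M+x, q*M+y) * Bl q p $$ (y,x))"
    by (subst sum.swap) (intro sum.cong refl, simp add: index_block4 block_index_less)
  also have "\<dots> = (\<Sum>p<4. \<Sum>q<4. entry_pairing M (blk M Phi p q) (Bl q p)\<^sup>T)"
  proof (intro sum.cong refl)
    fix p q assume "p \<in> {..<4::nat}" "q \<in> {..<4::nat}"
    then show "(\<Sum>x<M. \<Sum>y<M. Phi $$ (p*M+x, q*M+y) * Bl q p $$ (y,x)) =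
      entry_pairing M (blk M Phi p q) (Bl q p)\<^sup>T"
      using Bl[of q p] by (simp add: entry_pairing_def)
  qed
  finally show ?thesis .
qed

text \<open>Each off-diagonal block pairing is counted twice; this is where the factors \<open>2\<close> in
  \<open>Q\<^sub>1\<^sub>2, Q\<^sub>1\<^sub>3, Q\<^sub>2\<^sub>3, Q\<^sub>3\<^sub>3\<close> come from.\<close>
lemma mtrace_mult_block4_symmetric:
  assumes Phi: "(Phi::'a::comm_ring_1 mat) \<in> carrier_mat (4*M) (4*M)" "Phi\<^sup>T = Phi"
    and Bl: "\<And>p q. p < 4 \<Longrightarrow> q < 4 \<Longrightarrow> Bl p q \<in> carrier_mat M M"
    and lower: "\<And>p q. p < q \<Longrightarrow> q < 4 \<Longrightarrow> Bl q p = (Bl p q)\<^sup>T"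
  shows "mtrace (Phi * block4 M Bl) =
    (\<Sum>p<4. \<Sum>q<4. entry_pairing M (blk M Phi (min p q) (max p q)) (Bl (min p q) (max p q)))"
proof -
  have "entry_pairing M (blk M Phi p q) (Bl q p)\<^sup>T =
    entry_pairing M (blk M Phi (min p q) (max p q)) (Bl (min p q) (max p q))" if pq: "p < 4" "q < 4" for p q
  proof (cases "p < q")
    case True
    then show ?thesis using lower[OF True pq(2)] by simp
  next
    case False
    have "entry_pairing M (blk M Phi p q) (Bl q p)\<^sup>T = entry_pairing M (blk M Phi p q)\<^sup>T (Bl q p)"
      using entry_pairing_transpose[of "(blk M Phi p q)\<^sup>T" M "Bl q p"] Bl[OF pq(2,1)] by simp
    then show ?thesis using False transpose_blk[OF Phi pq] by (simp add: min_def max_def)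
  qed
  then have "(\<Sum>p<4. \<Sum>q<4. entry_pairing M (blk M Phi p q) (Bl q p)\<^sup>T) =
    (\<Sum>p<4. \<Sum>q<4. entry_pairing M (blk M Phi (min p q) (max p q)) (Bl (min p q) (max p q)))"
    by (intro sum.cong refl) simp
  with mtrace_mult_block4[OF Phi(1) Bl] show ?thesis by simp
qed


section \<open>Trace duality between the Fisher blocks and the matrices \<open>Q\<close>\<close>

locale sensing_model =
  fixes Nt Nr M :: nat and S :: sens
  assumes Am_carrier: "Am S \<in> carrier_mat Nt M" and dAth_carrier: "dAth S \<in> carrier_mat Nt M"
    and dAph_carrier: "dAph S \<in> carrier_mat Nt M" and Bm_carrier: "Bm S \<in> carrier_mat Nr M"
    and dBth_carrier: "dBth S \<in> carrier_mat Nr M" and dBph_carrier: "dBph S \<in> carrier_mat Nr M"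
    and Um_carrier: "Um S \<in> carrier_mat M M"
begin

lemma sens_dims [simp]:
  "dim_row (Am S) = Nt" "dim_col (Am S) = M" "dim_row (dAth S) = Nt" "dim_col (dAth S) = M"
  "dim_row (dAph S) = Nt" "dim_col (dAph S) = M" "dim_row (Bm S) = Nr" "dim_col (Bm S) = M"
  "dim_row (dBth S) = Nr" "dim_col (dBth S) = M" "dim_row (dBph S) = Nr" "dim_col (dBph S) = M"
  "dim_row (Um S) = M" "dim_col (Um S) = M"
  using Am_carrier dAth_carrier dAph_carrier Bm_carrier dBth_carrier dBph_carrier Um_carrier by auto

lemma Fab_dims [simp]: "dim_row (Fab S R dA1 dB1 dA2 dB2) = M" "dim_col (Fab S R dA1 dB1 dA2 dB2) = M"
  by (simp_all add: Fab_def Let_def)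

lemma F3_dims [simp]: "dim_row (F3 S R dA dB) = M" "dim_col (F3 S R dA dB) = M"
  by (simp_all add: F3_def Let_def)

lemma F33_dims [simp]: "dim_row (F33 S R) = M" "dim_col (F33 S R) = M"
  by (simp_all add: F33_def)

lemma mtrace_Qab_mult:
  assumes P: "P \<in> carrier_mat M M" and X: "X \<in> carrier_mat Nt Nt"
    and "dA1 \<in> carrier_mat Nt M" "dA2 \<in> carrier_mat Nt M" "dB1 \<in> carrier_mat Nr M" "dB2 \<in> carrier_mat Nr M"
  shows "mtrace (Qab S P dA1 dB1 dA2 dB2 * X) = entry_pairing M P (Fab S X dA1 dB1 dA2 dB2)"
proof -
  have [simp]: "dim_row P = M" "dim_col P = M" "dim_row X = Nt" "dim_col X = Nt"
    "dim_row dA1 = Nt" "dim_col dA1 = M" "dim_row dA2 = Nt" "dim_col dA2 = M"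
    "dim_row dB1 = Nr" "dim_col dB1 = M" "dim_row dB2 = Nr" "dim_col dB2 = M"
    using assms by auto
  define A B U where "A = Am S" and "B = Bm S" and "U = Um S"
  have [simp]: "dim_row A = Nt" "dim_col A = M" "dim_row B = Nr" "dim_col B = M" "dim_row U = M" "dim_col U = M"
    by (simp_all add: A_def B_def U_def)
  have tr: "mtrace (Y * mat_adjoint U * (P \<odot> C) * U * mat_adjoint Z * X) =
      entry_pairing M P ((U * mat_adjoint Z * X * Y * mat_adjoint U)\<^sup>T \<odot> C)"
    if "Y \<in> {A, dA1}" "Z \<in> {A, dA2}"
      "C \<in> {mat_adjoint dB1 * dB2, mat_adjoint B * dB2, mat_adjoint dB1 * B, mat_adjoint B * B}" for Y Z C
  proof -
    have "Y * mat_adjoint U \<in> carrier_mat Nt M" "U * mat_adjoint Z \<in> carrier_mat M Nt" "C \<in> carrier_mat M M"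
      using that by (auto intro!: carrier_matI)
    from mtrace_mult_hadamard[OF this(1) P this(3) this(2) X] show ?thesis
      using that by (auto simp: assoc_mult_mat_dim)
  qed
  show ?thesis
    unfolding Qab_def Fab_def Let_def A_def[symmetric] B_def[symmetric] U_def[symmetric]
    by (simp add: add_mult_distrib_mat_dim mtrace_add entry_pairing_add tr)
qed

lemma mtrace_Q3_mult:
  assumes P: "P \<in> carrier_mat M M" and X: "X \<in> carrier_mat Nt Nt"
    and "dA \<in> carrier_mat Nt M" "dB \<in> carrier_mat Nr M"
  shows "mtrace (Q3 S P dA dB * X) = entry_pairing M P (F3 S X dA dB)"
proof -
  have [simp]: "dim_row P = M" "dim_col P = M" "dim_row X = Nt" "dim_col X = Nt"
    "dim_row dA = Nt" "dim_col dA = M" "dim_row dB = Nr" "dim_col dB = M"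
    using assms by auto
  define A B U where "A = Am S" and "B = Bm S" and "U = Um S"
  have [simp]: "dim_row A = Nt" "dim_col A = M" "dim_row B = Nr" "dim_col B = M" "dim_row U = M" "dim_col U = M"
    by (simp_all add: A_def B_def U_def)
  have tr: "mtrace (Y * mat_adjoint U * (P \<odot> C) * mat_adjoint A * X) =
      entry_pairing M P ((mat_adjoint A * X * Y * mat_adjoint U)\<^sup>T \<odot> C)"
    if "Y \<in> {A, dA}" "C \<in> {mat_adjoint dB * B, mat_adjoint B * B}" for Y C
  proof -
    have "Y * mat_adjoint U \<in> carrier_mat Nt M" "mat_adjoint A \<in> carrier_mat M Nt" "C \<in> carrier_mat M M"
      using that by (auto intro!: carrier_matI)
    from mtrace_mult_hadamard[OF this(1) P this(3) this(2) X] show ?thesis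
      using that by (auto simp: assoc_mult_mat_dim)
  qed
  show ?thesis
    unfolding Q3_def F3_def Let_def A_def[symmetric] B_def[symmetric] U_def[symmetric]
    by (simp add: add_mult_distrib_mat_dim mtrace_add entry_pairing_add tr)
qed

lemma mtrace_Q33_mult:
  assumes P: "P \<in> carrier_mat M M" and X: "X \<in> carrier_mat Nt Nt"
  shows "mtrace (Am S * (P \<odot> (mat_adjoint (Bm S) * Bm S)) * mat_adjoint (Am S) * X) =
    entry_pairing M P (F33 S X)"
proof -
  have "mat_adjoint (Bm S) * Bm S \<in> carrier_mat M M" "mat_adjoint (Am S) \<in> carrier_mat M Nt"
    by (auto intro!: carrier_matI)
  from mtrace_mult_hadamard[OF Am_carrier P this(1) this(2) X] show ?thesis
    using X by (simp add: F33_def)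
qed

lemma Fab_hermitian:
  assumes R: "R \<in> carrier_mat Nt Nt" "mat_adjoint R = R"
    and "dA \<in> carrier_mat Nt M" "dB \<in> carrier_mat Nr M" and xy: "x < M" "y < M"
  shows "Fab S R dA dB dA dB $$ (y,x) = cnj (Fab S R dA dB dA dB $$ (x,y))"
proof -
  have [simp]: "dim_row R = Nt" "dim_col R = Nt" "dim_row dA = Nt" "dim_col dA = M"
    "dim_row dB = Nr" "dim_col dB = M"
    using assms by auto
  define A B U where "A = Am S" and "B = Bm S" and "U = Um S"
  have [simp]: "dim_row A = Nt" "dim_col A = M" "dim_row B = Nr" "dim_col B = M" "dim_row U = M" "dim_col U = M"
    by (simp_all add: A_def B_def U_def)
  define P1 P2 P3 P4 where "P1 = U * mat_adjoint A * R * A * mat_adjoint U"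
    and "P2 = U * mat_adjoint A * R * dA * mat_adjoint U" and "P3 = U * mat_adjoint dA * R * A * mat_adjoint U"
    and "P4 = U * mat_adjoint dA * R * dA * mat_adjoint U"
  define C1 C2 C3 C4 where "C1 = mat_adjoint dB * dB" and "C2 = mat_adjoint B * dB"
    and "C3 = mat_adjoint dB * B" and "C4 = mat_adjoint B * B"
  have dims [simp]: "dim_row P1 = M" "dim_col P1 = M" "dim_row P2 = M" "dim_col P2 = M"
    "dim_row P3 = M" "dim_col P3 = M" "dim_row P4 = M" "dim_col P4 = M"
    "dim_row C1 = M" "dim_col C1 = M" "dim_row C2 = M" "dim_col C2 = M"
    "dim_row C3 = M" "dim_col C3 = M" "dim_row C4 = M" "dim_col C4 = M"
    by (simp_all add: P1_def P2_def P3_def P4_def C1_def C2_def C3_def C4_def)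
  have adj: "mat_adjoint P1 = P1" "mat_adjoint P2 = P3" "mat_adjoint P3 = P2" "mat_adjoint P4 = P4"
    "mat_adjoint C1 = C1" "mat_adjoint C2 = C3" "mat_adjoint C3 = C2" "mat_adjoint C4 = C4"
    unfolding P1_def P2_def P3_def P4_def C1_def C2_def C3_def C4_def
    using R by (simp_all add: mat_adjoint_mult assoc_mult_mat_dim)
  have conj: "Z' $$ (u,v) = cnj (Z $$ (v,u))"
    if "mat_adjoint Z = Z'" "dim_row Z = M" "dim_col Z = M" "u < M" "v < M"
    for Z Z' u v
    using that by auto
  have F: "Fab S R dA dB dA dB = P1\<^sup>T \<odot> C1 + P2\<^sup>T \<odot> C2 + P3\<^sup>T \<odot> C3 + P4\<^sup>T \<odot> C4"
    by (simp add: Fab_def Let_def A_def[symmetric] B_def[symmetric] U_def[symmetric]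
        P1_def P2_def P3_def P4_def C1_def C2_def C3_def C4_def)
  show ?thesis
    unfolding F using xy
    by (simp add: conj[OF adj(1) _ _ xy] conj[OF adj(3) _ _ xy] conj[OF adj(2) _ _ xy] conj[OF adj(4) _ _ xy]
        conj[OF adj(5) _ _ xy(2,1)] conj[OF adj(7) _ _ xy(2,1)] conj[OF adj(6) _ _ xy(2,1)]
        conj[OF adj(8) _ _ xy(2,1)])
qed

lemma F33_hermitian:
  assumes R: "R \<in> carrier_mat Nt Nt" "mat_adjoint R = R" and xy: "x < M" "y < M"
  shows "F33 S R $$ (y,x) = cnj (F33 S R $$ (x,y))"
proof -
  have [simp]: "dim_row R = Nt" "dim_col R = Nt" using R by auto
  define P C where "P = mat_adjoint (Am S) * R * Am S" and "C = mat_adjoint (Bm S) * Bm S"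
  have [simp]: "dim_row P = M" "dim_col P = M" "dim_row C = M" "dim_col C = M"
    by (simp_all add: P_def C_def)
  have "mat_adjoint P = P" "mat_adjoint C = C"
    unfolding P_def C_def using R by (simp_all add: mat_adjoint_mult assoc_mult_mat_dim)
  then have "P $$ (x,y) = cnj (P $$ (y,x))" "C $$ (y,x) = cnj (C $$ (x,y))"
    using index_mat_adjoint[of x P y] index_mat_adjoint[of y C x] xy by auto
  then show ?thesis using xy by (simp add: F33_def P_def[symmetric] C_def[symmetric])
qed

lemma Qab_dims [simp]:
  "dim_row (Qab S P dA1 dB1 dA2 dB2) = dim_row dA1" "dim_col (Qab S P dA1 dB1 dA2 dB2) = dim_row dA2"
  by (simp_all add: Qab_def Let_def)

lemma Q3_dims [simp]: "dim_row (Q3 S P dA dB) = dim_row dA" "dim_col (Q3 S P dA dB) = Nt"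
  by (simp_all add: Q3_def Let_def)

end

definition fisher_blocks :: "sens \<Rightarrow> complex mat \<Rightarrow> nat \<Rightarrow> nat \<Rightarrow> real mat" where
  "fisher_blocks S R = (let
      F11 = Fab S R (dAth S) (dBth S) (dAth S) (dBth S);
      F12 = Fab S R (dAth S) (dBth S) (dAph S) (dBph S);
      F22 = Fab S R (dAph S) (dBph S) (dAph S) (dBph S);
      F13 = F3 S R (dAth S) (dBth S);
      F23 = F3 S R (dAph S) (dBph S);
      G = F33 S R
    in (\<lambda>p q. [[re_mat F11, re_mat F12, re_mat F13, - im_mat F13],
               [re_mat F12\<^sup>T, re_mat F22, re_mat F23, - im_mat F23],
               [re_mat F13\<^sup>T, re_mat F23\<^sup>T, re_mat G, - im_mat G],
               [- im_mat F13\<^sup>T, - im_mat F23\<^sup>T, - im_mat G\<^sup>T, re_mat G]] ! p ! q))"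

lemma fisher_eq_block4:
  "fisher M L s2s S W = (2 * real L / s2s) \<cdot>\<^sub>m block4 M (fisher_blocks S (W * mat_adjoint W))"
  unfolding fisher_def fisher_blocks_def Let_def ..

lemma fisher_dims [simp]: "dim_row (fisher M L s2s S W) = 4*M" "dim_col (fisher M L s2s S W) = 4*M"
  by (simp_all add: fisher_eq_block4)

definition Q_of_Phi :: "nat \<Rightarrow> sens \<Rightarrow> real mat \<Rightarrow> complex mat" where
  "Q_of_Phi M S Phi = (let P = (\<lambda>p q. cmat (blk M Phi p q));
      Q11 = Qab S (P 0 0) (dAth S) (dBth S) (dAth S) (dBth S);
      Q12 = (2::complex) \<cdot>\<^sub>m Qab S (P 0 1) (dAth S) (dBth S) (dAph S) (dBph S);
      Q22 = Qab S (P 1 1) (dAph S) (dBph S) (dAph S) (dBph S);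
      Q13 = Q3 S ((2::complex) \<cdot>\<^sub>m P 0 2 + (2 * \<i>) \<cdot>\<^sub>m P 0 3) (dAth S) (dBth S);
      Q23 = Q3 S ((2::complex) \<cdot>\<^sub>m P 1 2 + (2 * \<i>) \<cdot>\<^sub>m P 1 3) (dAph S) (dBph S);
      Q33 = Am S * ((P 2 2 + P 3 3 + (2 * \<i>) \<cdot>\<^sub>m P 2 3) \<odot> (mat_adjoint (Bm S) * Bm S)) * mat_adjoint (Am S)
    in Q11 + Q12 + Q13 + Q22 + Q23 + Q33)"

lemma Qmat_eq_Q_of_Phi:
  "Qmat M L s2s S W = complex_of_real (2 * real L / s2s) \<cdot>\<^sub>m
     Q_of_Phi M S (minv (fisher M L s2s S W) * minv (fisher M L s2s S W))"
  unfolding Qmat_def Q_of_Phi_def Let_def ..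

text \<open>Both \<open>Re tr(Q X)\<close> and \<open>tr(\<Phi> F(X))\<close> reduce to this number, \<open>F(X)\<close> being the Fisher
  block matrix with \<open>R\<^sub>x\<close> replaced by \<open>X\<close>.\<close>
definition fisher_pairing :: "nat \<Rightarrow> sens \<Rightarrow> real mat \<Rightarrow> complex mat \<Rightarrow> real" where
  "fisher_pairing M S Phi X = (let P = blk M Phi;
      F11 = Fab S X (dAth S) (dBth S) (dAth S) (dBth S);
      F12 = Fab S X (dAth S) (dBth S) (dAph S) (dBph S);
      F22 = Fab S X (dAph S) (dBph S) (dAph S) (dBph S);
      F13 = F3 S X (dAth S) (dBth S);
      F23 = F3 S X (dAph S) (dBph S);
      G = F33 S X
    in entry_pairing M (P 0 0) (re_mat F11) + 2 * entry_pairing M (P 0 1) (re_mat F12)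
     + 2 * entry_pairing M (P 0 2) (re_mat F13) - 2 * entry_pairing M (P 0 3) (im_mat F13)
     + entry_pairing M (P 1 1) (re_mat F22)
     + 2 * entry_pairing M (P 1 2) (re_mat F23) - 2 * entry_pairing M (P 1 3) (im_mat F23)
     + entry_pairing M (P 2 2) (re_mat G) + entry_pairing M (P 3 3) (re_mat G)
     - 2 * entry_pairing M (P 2 3) (im_mat G))"

context sensing_model
begin

lemma fisher_blocks_carrier: "p < 4 \<Longrightarrow> q < 4 \<Longrightarrow> fisher_blocks S R p q \<in> carrier_mat M M"
  by (auto simp: fisher_blocks_def Let_def less_Suc_eq numeral_eq_Suc intro!: carrier_matI)

lemma fisher_blocks_lower: "p < q \<Longrightarrow> q < 4 \<Longrightarrow> fisher_blocks S R q p = (fisher_blocks S R p q)\<^sup>T"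
  by (auto simp: fisher_blocks_def Let_def less_Suc_eq numeral_eq_Suc re_mat_def im_mat_def
      map_mat_transpose transpose_uminus)

lemma Q_of_Phi_dims [simp]: "dim_row (Q_of_Phi M S Phi) = Nt" "dim_col (Q_of_Phi M S Phi) = Nt"
  by (simp_all add: Q_of_Phi_def Let_def)

lemma fisher_blocks_swap:
  assumes R: "R \<in> carrier_mat Nt Nt" "mat_adjoint R = R"
    and pq: "p < 4" "q < 4" and xy: "x < M" "y < M"
  shows "fisher_blocks S R p q $$ (x,y) = fisher_blocks S R q p $$ (y,x)"
proof -
  have "Re (Fab S R dA dB dA dB $$ (x,y)) = Re (Fab S R dA dB dA dB $$ (y,x))"
    if "dA \<in> carrier_mat Nt M" "dB \<in> carrier_mat Nr M" for dA dB
    using Fab_hermitian[OF R that xy] by simp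
  moreover have "Re (F33 S R $$ (x,y)) = Re (F33 S R $$ (y,x))"
    using F33_hermitian[OF R xy] by simp
  ultimately show ?thesis
    using pq xy dAth_carrier dBth_carrier dAph_carrier dBph_carrier
    by (auto simp: fisher_blocks_def Let_def less_Suc_eq numeral_eq_Suc)
qed

lemma Re_mtrace_Q_of_Phi_mult:
  assumes X: "X \<in> carrier_mat Nt Nt"
  shows "Re (mtrace (Q_of_Phi M S Phi * X)) = fisher_pairing M S Phi X"
proof -
  have [simp]: "dim_row X = Nt" "dim_col X = Nt" using X by auto
  define P where "P p q = cmat (blk M Phi p q)" for p q
  have P: "P p q \<in> carrier_mat M M" for p q by (auto simp: P_def intro!: carrier_matI)
  define P13 P23 P33 where "P13 = (2::complex) \<cdot>\<^sub>m P 0 2 + (2 * \<i>) \<cdot>\<^sub>m P 0 3"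
    and "P23 = (2::complex) \<cdot>\<^sub>m P 1 2 + (2 * \<i>) \<cdot>\<^sub>m P 1 3"
    and "P33 = P 2 2 + P 3 3 + (2 * \<i>) \<cdot>\<^sub>m P 2 3"
  have P': "P13 \<in> carrier_mat M M" "P23 \<in> carrier_mat M M" "P33 \<in> carrier_mat M M"
    by (auto simp: P_def P13_def P23_def P33_def intro!: carrier_matI)
  have "mtrace (Q_of_Phi M S Phi * X) = entry_pairing M (P 0 0) (Fab S X (dAth S) (dBth S) (dAth S) (dBth S))
      + 2 * entry_pairing M (P 0 1) (Fab S X (dAth S) (dBth S) (dAph S) (dBph S))
      + entry_pairing M P13 (F3 S X (dAth S) (dBth S))
      + entry_pairing M (P 1 1) (Fab S X (dAph S) (dBph S) (dAph S) (dBph S))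
      + entry_pairing M P23 (F3 S X (dAph S) (dBph S))
      + entry_pairing M P33 (F33 S X)"
    unfolding Q_of_Phi_def Let_def P_def[symmetric] P13_def[symmetric] P23_def[symmetric] P33_def[symmetric]
    using dAth_carrier dBth_carrier dAph_carrier dBph_carrier
    by (simp add: add_mult_distrib_mat_dim mtrace_add smult_mult_mat_dim mtrace_smult mtrace_Qab_mult[OF P X]
        mtrace_Q3_mult[OF P'(1) X] mtrace_Q3_mult[OF P'(2) X] mtrace_Q33_mult[OF P'(3) X])
  then show ?thesis
    unfolding fisher_pairing_def Let_def entry_pairing_def
    by (simp add: P_def P13_def P23_def P33_def sum.distrib sum_subtractf sum_distrib_left sum_negf algebra_simps)
qed

lemma mtrace_mult_block4_fisher_blocks:
  assumes Phi: "Phi \<in> carrier_mat (4*M) (4*M)" "Phi\<^sup>T = Phi"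
  shows "mtrace (Phi * block4 M (fisher_blocks S X)) = fisher_pairing M S Phi X"
  by (subst mtrace_mult_block4_symmetric[OF Phi fisher_blocks_carrier fisher_blocks_lower])
    (simp_all add: fisher_pairing_def fisher_blocks_def Let_def eval_nat_numeral entry_pairing_uminus)

end

section \<open>Derivative of the trace of an inverse matrix\<close>

lemma isCont_det:
  assumes G: "\<And>t. (G t :: real mat) \<in> carrier_mat n n"
    and cont: "\<And>i j. i < n \<Longrightarrow> j < n \<Longrightarrow> isCont (\<lambda>t. G t $$ (i,j)) x"
  shows "isCont (\<lambda>t. det (G t)) x"
proof -
  have "(\<lambda>t. det (G t)) = (\<lambda>t. \<Sum>p \<in> {p. p permutes {0..<n}}. signof p * (\<Prod>i = 0..<n. G t $$ (i, p i)))"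
    using det_def'[OF G] by blast
  moreover have "isCont (\<lambda>t. G t $$ (i, p i)) x" if "p permutes {0..<n}" "i \<in> {0..<n}" for p i
    using that cont permutes_in_image by fastforce
  ultimately show ?thesis
    by (simp only:) (intro continuous_sum continuous_mult continuous_const continuous_prod; simp)
qed

lemma det_nonzero_minv:
  assumes A: "(A::'a::field mat) \<in> carrier_mat n n" and det: "det A \<noteq> 0"
  shows "minv A \<in> carrier_mat n n" "A * minv A = 1\<^sub>m n" "minv A * A = 1\<^sub>m n"
    "minv A = (1 / det A) \<cdot>\<^sub>m adj_mat A"
proof -
  have "A \<in> Units (ring_mat TYPE('a) n undefined)" by (rule det_non_zero_imp_unit[OF A det])
  then obtain B where B: "mat_inverse A = Some B"
    using mat_inverse(1)[OF A, of undefined] by (cases "mat_inverse A") auto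
  then have B_minv: "minv A = B" by (simp add: minv_def)
  from mat_inverse(2)[OF A B] have AB: "A * B = 1\<^sub>m n" "B * A = 1\<^sub>m n" "B \<in> carrier_mat n n" by auto
  then show "minv A \<in> carrier_mat n n" "A * minv A = 1\<^sub>m n" "minv A * A = 1\<^sub>m n" using B_minv by auto
  have adj: "A * adj_mat A = det A \<cdot>\<^sub>m 1\<^sub>m n" "adj_mat A \<in> carrier_mat n n" using adj_mat[OF A] by auto
  have "A * ((1 / det A) \<cdot>\<^sub>m adj_mat A) = (1 / det A) \<cdot>\<^sub>m (det A \<cdot>\<^sub>m 1\<^sub>m n)"
    using mult_smult_distrib[OF A adj(2)] by (simp add: adj(1))
  also have "\<dots> = 1\<^sub>m n" using det by (intro eq_matI) auto
  finally have inv: "A * ((1 / det A) \<cdot>\<^sub>m adj_mat A) = 1\<^sub>m n" .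
  have "B = B * (A * ((1 / det A) \<cdot>\<^sub>m adj_mat A))" using AB(3) by (simp add: inv)
  also have "\<dots> = (B * A) * ((1 / det A) \<cdot>\<^sub>m adj_mat A)"
    using assoc_mult_mat[OF AB(3) A smult_carrier_mat[OF adj(2)]] by simp
  also have "\<dots> = (1 / det A) \<cdot>\<^sub>m adj_mat A" using AB(2) adj(2) by simp
  finally show "minv A = (1 / det A) \<cdot>\<^sub>m adj_mat A" using B_minv by simp
qed

lemma invertible_mat_det_nonzero:
  assumes "invertible_mat (A::'a::comm_ring_1 mat)" "A \<in> carrier_mat n n"
  shows "det A \<noteq> 0"
proof -
  obtain B where B: "A * B = 1\<^sub>m n" "B * A = 1\<^sub>m (dim_row B)"
    using assms unfolding invertible_mat_def inverts_mat_def by auto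
  have "dim_col B = n" using arg_cong[OF B(1), of dim_col] by simp
  moreover have "dim_row B = n" using arg_cong[OF B(2), of dim_col] assms(2) by simp
  ultimately have "B \<in> carrier_mat n n" by blast
  then have "det A * det B = det (A * B)" using det_mult[OF assms(2)] by simp
  then show ?thesis using B(1) by auto
qed

lemma minv_diff:
  assumes A: "(A::'a::field mat) \<in> carrier_mat n n" "det A \<noteq> 0"
    and B: "B \<in> carrier_mat n n" "det B \<noteq> 0"
  shows "minv B - minv A = minv B * (A - B) * minv A"
proof -
  note iA = det_nonzero_minv(1-3)[OF A] and iB = det_nonzero_minv(1-3)[OF B]
  have "minv B * (A - B) * minv A = minv B * A * minv A - minv B * B * minv A"
    using A B iA iB by (simp add: mult_minus_distrib_mat minus_mult_distrib_mat[of _ n n])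
  also have "\<dots> = minv B - minv A"
    using A(1) iA iB by (simp add: assoc_mult_mat[of "minv B" n n A n "minv A" n])
  finally show ?thesis ..
qed

lemma mtrace_minv_diff:
  assumes A: "(A::'a::field mat) \<in> carrier_mat n n" "det A \<noteq> 0"
    and B: "B \<in> carrier_mat n n" "det B \<noteq> 0"
  shows "mtrace (minv B) - mtrace (minv A) =
    (\<Sum>a<n. \<Sum>c<n. \<Sum>d<n. minv B $$ (a,c) * (A $$ (c,d) - B $$ (c,d)) * minv A $$ (d,a))"
proof -
  have iA: "minv A \<in> carrier_mat n n" and iB: "minv B \<in> carrier_mat n n"
    using det_nonzero_minv(1) A B by auto
  have "mtrace (minv B) - mtrace (minv A) = (\<Sum>a<n. (minv B - minv A) $$ (a,a))"
    using iA iB by (simp add: mtrace_def sum_subtractf)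
  also have "\<dots> = (\<Sum>a<n. \<Sum>c<n. \<Sum>d<n. minv B $$ (a,c) * (A $$ (c,d) - B $$ (c,d)) * minv A $$ (d,a))"
    unfolding minv_diff[OF A B] using iA iB A B
    by (simp add: scalar_prod_def atLeast0LessThan sum_distrib_left sum_distrib_right mult.assoc)
      (rule sum.cong[OF refl], rule sum.swap)
  finally show ?thesis .
qed

lemma isCont_minv_index:
  fixes F :: "real \<Rightarrow> real mat"
  assumes F: "\<And>t. F t \<in> carrier_mat n n"
    and cont: "\<And>i j. i < n \<Longrightarrow> j < n \<Longrightarrow> isCont (\<lambda>t. F t $$ (i,j)) x"
    and det: "det (F x) \<noteq> 0" and ab: "a < n" "b < n"
  shows "isCont (\<lambda>t. minv (F t) $$ (a,b)) x"
proof -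
  have cdet: "isCont (\<lambda>t. det (F t)) x" by (rule isCont_det[OF F cont])
  have "isCont (\<lambda>t. det (mat_delete (F t) b a)) x"
  proof (rule isCont_det)
    show "mat_delete (F t) b a \<in> carrier_mat (n-1) (n-1)" for t by (rule mat_delete_carrier[OF F])
    fix i j assume ij: "i < n - 1" "j < n - 1"
    then have "isCont (\<lambda>t. F t $$ (if i < b then i else Suc i, if j < a then j else Suc j)) x"
      by (intro cont) auto
    moreover have "mat_delete (F t) b a $$ (i,j) =
        F t $$ (if i < b then i else Suc i, if j < a then j else Suc j)" for t
      using F[of t] ij by (simp add: mat_delete_def)
    ultimately show "isCont (\<lambda>t. mat_delete (F t) b a $$ (i,j)) x" by simp
  qed
  moreover have "adj_mat (F t) $$ (a,b) = (-1)^(b+a) * det (mat_delete (F t) b a)" for t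
    using F[of t] ab by (simp add: adj_mat_def cofactor_def)
  ultimately have "isCont (\<lambda>t. adj_mat (F t) $$ (a,b)) x"
    by (simp add: continuous_intros)
  then have "isCont (\<lambda>t. (1 / det (F t)) * adj_mat (F t) $$ (a,b)) x"
    using cdet det by (intro continuous_intros)
  moreover have "\<forall>\<^sub>F t in nhds x. minv (F t) $$ (a,b) = (1 / det (F t)) * adj_mat (F t) $$ (a,b)"
  proof -
    obtain e where "e > 0" and e: "\<And>y. dist x y < e \<Longrightarrow> det (F y) \<noteq> 0"
      using continuous_at_avoid[OF cdet det] by blast
    have "minv (F t) $$ (a,b) = (1 / det (F t)) * adj_mat (F t) $$ (a,b)" if "det (F t) \<noteq> 0" for t
      using det_nonzero_minv(4)[OF F that] adj_mat(1)[OF F[of t]] ab by simp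
    then show ?thesis
      unfolding eventually_nhds_metric using \<open>e > 0\<close> e by (metis dist_commute)
  qed
  ultimately show ?thesis by (simp add: isCont_cong)
qed

lemma has_real_derivative_mtrace_minv:
  fixes F :: "real \<Rightarrow> real mat"
  assumes F: "\<And>t. F t \<in> carrier_mat n n" and F': "F' \<in> carrier_mat n n"
    and deriv: "\<And>a b. a < n \<Longrightarrow> b < n \<Longrightarrow> ((\<lambda>t. F t $$ (a,b)) has_real_derivative F' $$ (a,b)) (at x)"
    and det: "det (F x) \<noteq> 0"
  shows "((\<lambda>t. mtrace (minv (F t))) has_real_derivative - mtrace (minv (F x) * F' * minv (F x))) (at x)"
proof -
  define G where "G t = minv (F t)" for t
  have G: "G t \<in> carrier_mat n n" if "det (F t) \<noteq> 0" for t
    using det_nonzero_minv(1)[OF F that] by (simp add: G_def)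
  have G_lim: "((\<lambda>t. G t $$ (a,c)) \<longlongrightarrow> G x $$ (a,c)) (at x)" if "a < n" "c < n" for a c
    using isCont_minv_index[OF F DERIV_isCont[OF deriv] det that] by (simp add: G_def isCont_def)
  have quotient: "\<forall>\<^sub>F t in at x. (mtrace (G t) - mtrace (G x)) / (t - x) =
      - (\<Sum>a<n. \<Sum>c<n. \<Sum>d<n. G t $$ (a,c) * ((F t $$ (c,d) - F x $$ (c,d)) / (t - x)) * G x $$ (d,a))"
  proof -
    obtain e where "e > 0" "\<And>y. dist x y < e \<Longrightarrow> det (F y) \<noteq> 0"
      using continuous_at_avoid[OF isCont_det[OF F DERIV_isCont[OF deriv]] det] by blast
    then have "\<forall>\<^sub>F t in at x. det (F t) \<noteq> 0 \<and> t \<noteq> x"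
      by (auto simp: eventually_at dist_commute)
    then show ?thesis
    proof (rule eventually_mono)
      fix t assume t: "det (F t) \<noteq> 0 \<and> t \<noteq> x"
      have "mtrace (G t) - mtrace (G x) =
          (\<Sum>a<n. \<Sum>c<n. \<Sum>d<n. G t $$ (a,c) * (F x $$ (c,d) - F t $$ (c,d)) * G x $$ (d,a))"
        unfolding G_def using mtrace_minv_diff[OF F[of x] det F[of t]] t by simp
      then show "(mtrace (G t) - mtrace (G x)) / (t - x) =
          - (\<Sum>a<n. \<Sum>c<n. \<Sum>d<n. G t $$ (a,c) * ((F t $$ (c,d) - F x $$ (c,d)) / (t - x)) * G x $$ (d,a))"
        using t by (simp add: sum_divide_distrib[symmetric] sum_negf[symmetric] field_simps)
    qed
  qed
  have "((\<lambda>t. - (\<Sum>a<n. \<Sum>c<n. \<Sum>d<n. G t $$ (a,c) * ((F t $$ (c,d) - F x $$ (c,d)) / (t - x)) * G x $$ (d,a)))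
      \<longlongrightarrow> - (\<Sum>a<n. \<Sum>c<n. \<Sum>d<n. G x $$ (a,c) * F' $$ (c,d) * G x $$ (d,a))) (at x)"
    using G_lim deriv by (intro tendsto_intros) (auto simp: has_field_derivative_iff)
  moreover have "(\<Sum>a<n. \<Sum>c<n. \<Sum>d<n. G x $$ (a,c) * F' $$ (c,d) * G x $$ (d,a)) = mtrace (G x * F' * G x)"
    using G[OF det] F' by (simp add: mtrace_def scalar_prod_def atLeast0LessThan sum_distrib_left mult.assoc)
  ultimately show ?thesis
    unfolding has_field_derivative_iff using tendsto_cong[OF quotient] by (simp add: G_def)
qed

lemma minv_symmetric:
  assumes A: "(A::'a::field mat) \<in> carrier_mat n n" "det A \<noteq> 0" "A\<^sup>T = A"
  shows "(minv A)\<^sup>T = minv A"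
proof -
  note iA = det_nonzero_minv[OF A(1,2)]
  have T: "(minv A)\<^sup>T \<in> carrier_mat n n" using iA(1) by simp
  have left: "(minv A)\<^sup>T * A = 1\<^sub>m n"
    using transpose_mult[OF A(1) iA(1)] A(3) iA(2) by simp
  have "(minv A)\<^sup>T = (minv A)\<^sup>T * (A * minv A)" using T iA(2) by simp
  also have "\<dots> = ((minv A)\<^sup>T * A) * minv A" using assoc_mult_mat[OF T A(1) iA(1)] by simp
  also have "\<dots> = minv A" using left iA(1) by simp
  finally show ?thesis .
qed

definition elementary_mat :: "nat \<Rightarrow> nat \<Rightarrow> nat \<Rightarrow> nat \<Rightarrow> complex \<Rightarrow> complex mat" where
  "elementary_mat n m i j c = Matrix.mat n m (\<lambda>(a,b). if a = i \<and> b = j then c else 0)"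

lemma elementary_mat_carrier [simp]: "elementary_mat n m i j c \<in> carrier_mat n m"
  by (simp add: elementary_mat_def)

lemma elementary_mat_dims [simp]:
  "dim_row (elementary_mat n m i j c) = n" "dim_col (elementary_mat n m i j c) = m"
  by (simp_all add: elementary_mat_def)

lemma pert_eq_add_elementary:
  "i < dim_row W \<Longrightarrow> j < dim_col W \<Longrightarrow>
   pert W i j (complex_of_real t * c) = W + complex_of_real t \<cdot>\<^sub>m elementary_mat (dim_row W) (dim_col W) i j c"
  by (rule eq_matI) (auto simp: pert_def elementary_mat_def)

text \<open>Testing with \<open>c = 1\<close> and \<open>c = \<i>\<close> recovers the derivatives along \<open>Re W\<^sub>i\<^sub>j\<close> and \<open>Im W\<^sub>i\<^sub>j\<close>.\<close>
lemma has_gradientI: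
  assumes "G \<in> carrier_mat (dim_row W) (dim_col W)"
    and "\<And>i j c. i < dim_row W \<Longrightarrow> j < dim_col W \<Longrightarrow>
      ((\<lambda>t. g (pert W i j (complex_of_real t * c))) has_real_derivative Re (cnj c * G $$ (i,j))) (at 0)"
  shows "has_gradient g W G"
  using assms(1) assms(2)[of _ _ 1] assms(2)[of _ _ \<i>] unfolding has_gradient_def by (simp add: mult.commute)

lemma mtrace_adjoint_elementary_mult:
  assumes "Z \<in> carrier_mat n m" "i < n" "j < m"
  shows "mtrace (mat_adjoint (elementary_mat n m i j c) * Z) = cnj c * Z $$ (i,j)"
proof -
  have "mtrace (mat_adjoint (elementary_mat n m i j c) * Z) =
      (\<Sum>b<m. \<Sum>a<n. cnj (elementary_mat n m i j c $$ (a,b)) * Z $$ (a,b))"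
    using assms by (simp add: mtrace_def scalar_prod_def atLeast0LessThan)
  also have "\<dots> = (\<Sum>b<m. if b = j then cnj c * Z $$ (i,b) else 0)"
  proof (intro sum.cong refl)
    fix b assume "b \<in> {..<m}"
    then show "(\<Sum>a<n. cnj (elementary_mat n m i j c $$ (a,b)) * Z $$ (a,b)) =
        (if b = j then cnj c * Z $$ (i,b) else 0)"
      using assms by (cases "b = j") (simp_all add: elementary_mat_def if_distrib[of cnj]
          if_distrib[of "\<lambda>x. x * _"] cong: if_cong)
  qed
  also have "\<dots> = cnj c * Z $$ (i,j)" using assms by simp
  finally show ?thesis .
qed

lemma Re_mtrace_mult_elementary_perturbation:
  fixes c :: complex
  assumes Q: "Q \<in> carrier_mat n n" and W: "W \<in> carrier_mat n m" and ij: "i < n" "j < m"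
  defines "E \<equiv> elementary_mat n m i j c"
  shows "Re (mtrace (Q * (E * mat_adjoint W + W * mat_adjoint E))) =
    Re (cnj c * ((Q + mat_adjoint Q) * W) $$ (i,j))"
proof -
  have E: "E \<in> carrier_mat n m" by (simp add: E_def)
  have "mtrace (Q * (W * mat_adjoint E)) = mtrace (mat_adjoint E * (Q * W))"
    using Q W E
    by (simp add: assoc_mult_mat[of Q n n W m "mat_adjoint E" n, symmetric] mtrace_mult_comm[of _ n m])
  also have "\<dots> = cnj c * (Q * W) $$ (i,j)"
    unfolding E_def using Q W ij by (intro mtrace_adjoint_elementary_mult) auto
  finally have QW: "mtrace (Q * (W * mat_adjoint E)) = cnj c * (Q * W) $$ (i,j)" .
  have "mtrace (Q * (E * mat_adjoint W)) = cnj (mtrace (mat_adjoint (Q * (E * mat_adjoint W))))"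
    using Q W E by (simp add: mtrace_mat_adjoint)
  also have "mat_adjoint (Q * (E * mat_adjoint W)) = W * mat_adjoint E * mat_adjoint Q"
    using Q W E by (simp add: mat_adjoint_mult)
  also have "mtrace \<dots> = mtrace ((mat_adjoint E * mat_adjoint Q) * W)"
    using Q W E mtrace_mult_comm[OF W mult_carrier_mat[OF mat_adjoint_carrier[OF E] mat_adjoint_carrier[OF Q]]]
    by (simp add: assoc_mult_mat[of W n m "mat_adjoint E" n "mat_adjoint Q" n])
  also have "\<dots> = mtrace (mat_adjoint E * (mat_adjoint Q * W))"
    using Q W E by (simp add: assoc_mult_mat[of "mat_adjoint E" m n "mat_adjoint Q" n W m])
  also have "\<dots> = cnj c * (mat_adjoint Q * W) $$ (i,j)"
    unfolding E_def using Q W ij by (intro mtrace_adjoint_elementary_mult) auto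
  finally have QhW: "mtrace (Q * (E * mat_adjoint W)) = cnj (cnj c * (mat_adjoint Q * W) $$ (i,j))" .
  have "((Q + mat_adjoint Q) * W) $$ (i,j) = (Q * W) $$ (i,j) + (mat_adjoint Q * W) $$ (i,j)"
    using Q W ij by (simp add: add_mult_distrib_mat[of Q n n "mat_adjoint Q" W m])
  then show ?thesis
    using Q W E by (simp add: mult_add_distrib_mat[of Q n n _ n] mtrace_add QW QhW algebra_simps)
qed

lemma quadratic_has_real_derivative_at_0: "((\<lambda>t. a + t * b + t^2 * c) has_real_derivative b) (at 0)"
  by (auto intro!: derivative_eq_intros)

lemma gram_add_smult:
  assumes W: "(W::complex mat) \<in> carrier_mat n m" and E: "E \<in> carrier_mat n m"
  shows "(W + complex_of_real t \<cdot>\<^sub>m E) * mat_adjoint (W + complex_of_real t \<cdot>\<^sub>m E) =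
    W * mat_adjoint W + complex_of_real t \<cdot>\<^sub>m (E * mat_adjoint W + W * mat_adjoint E)
      + complex_of_real (t^2) \<cdot>\<^sub>m (E * mat_adjoint E)"
proof -
  have [simp]: "dim_row W = n" "dim_col W = m" "dim_row E = n" "dim_col E = m" using assms by auto
  show ?thesis
    by (rule eq_matI) (simp_all add: mat_adjoint_add mat_adjoint_smult mult_add_distrib_mat_dim
        add_mult_distrib_mat_dim mult_smult_mat_dim smult_mult_mat_dim algebra_simps power2_eq_square)
qed

context sensing_model
begin

lemma Fab_linear:
  assumes "R0 \<in> carrier_mat Nt Nt" "X \<in> carrier_mat Nt Nt" "Y \<in> carrier_mat Nt Nt"
    and "dA1 \<in> carrier_mat Nt M" "dA2 \<in> carrier_mat Nt M" "dB1 \<in> carrier_mat Nr M" "dB2 \<in> carrier_mat Nr M"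
    and "x < M" "y < M"
  shows "Fab S (R0 + a \<cdot>\<^sub>m X + b \<cdot>\<^sub>m Y) dA1 dB1 dA2 dB2 $$ (x,y) =
    Fab S R0 dA1 dB1 dA2 dB2 $$ (x,y) + a * Fab S X dA1 dB1 dA2 dB2 $$ (x,y)
      + b * Fab S Y dA1 dB1 dA2 dB2 $$ (x,y)"
  using assms
  by (simp add: Fab_def Let_def mult_add_distrib_mat_dim add_mult_distrib_mat_dim mult_smult_mat_dim
      smult_mult_mat_dim algebra_simps)

lemma F3_linear:
  assumes "R0 \<in> carrier_mat Nt Nt" "X \<in> carrier_mat Nt Nt" "Y \<in> carrier_mat Nt Nt"
    and "dA \<in> carrier_mat Nt M" "dB \<in> carrier_mat Nr M" and "x < M" "y < M"
  shows "F3 S (R0 + a \<cdot>\<^sub>m X + b \<cdot>\<^sub>m Y) dA dB $$ (x,y) =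
    F3 S R0 dA dB $$ (x,y) + a * F3 S X dA dB $$ (x,y) + b * F3 S Y dA dB $$ (x,y)"
  using assms
  by (simp add: F3_def Let_def mult_add_distrib_mat_dim add_mult_distrib_mat_dim mult_smult_mat_dim
      smult_mult_mat_dim algebra_simps)

lemma F33_linear:
  assumes "R0 \<in> carrier_mat Nt Nt" "X \<in> carrier_mat Nt Nt" "Y \<in> carrier_mat Nt Nt" and "x < M" "y < M"
  shows "F33 S (R0 + a \<cdot>\<^sub>m X + b \<cdot>\<^sub>m Y) $$ (x,y) =
    F33 S R0 $$ (x,y) + a * F33 S X $$ (x,y) + b * F33 S Y $$ (x,y)"
  using assms
  by (simp add: F33_def mult_add_distrib_mat_dim add_mult_distrib_mat_dim mult_smult_mat_dim
      smult_mult_mat_dim algebra_simps)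

lemma fisher_blocks_linear:
  assumes R0: "R0 \<in> carrier_mat Nt Nt" and X: "X \<in> carrier_mat Nt Nt" and Y: "Y \<in> carrier_mat Nt Nt"
    and "p < 4" "q < 4" "x < M" "y < M"
  shows "fisher_blocks S (R0 + complex_of_real t \<cdot>\<^sub>m X + complex_of_real s \<cdot>\<^sub>m Y) p q $$ (x,y) =
    fisher_blocks S R0 p q $$ (x,y) + t * fisher_blocks S X p q $$ (x,y) + s * fisher_blocks S Y p q $$ (x,y)"
  using assms
    Fab_linear[OF R0 X Y dAth_carrier dAth_carrier dBth_carrier dBth_carrier]
    Fab_linear[OF R0 X Y dAth_carrier dAph_carrier dBth_carrier dBph_carrier]
    Fab_linear[OF R0 X Y dAph_carrier dAph_carrier dBph_carrier dBph_carrier]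
    F3_linear[OF R0 X Y dAth_carrier dBth_carrier] F3_linear[OF R0 X Y dAph_carrier dBph_carrier]
    F33_linear[OF R0 X Y]
  by (auto simp: fisher_blocks_def Let_def less_Suc_eq numeral_eq_Suc algebra_simps)

lemma fisher_add_smult_index:
  assumes W: "W \<in> carrier_mat Nt n" and E: "E \<in> carrier_mat Nt n" and ab: "a < 4*M" "b < 4*M"
  shows "fisher M L s2s S (W + complex_of_real t \<cdot>\<^sub>m E) $$ (a,b) =
     fisher M L s2s S W $$ (a,b)
     + t * ((2 * real L / s2s) \<cdot>\<^sub>m block4 M (fisher_blocks S (E * mat_adjoint W + W * mat_adjoint E))) $$ (a,b)
     + t^2 * ((2 * real L / s2s) \<cdot>\<^sub>m block4 M (fisher_blocks S (E * mat_adjoint E))) $$ (a,b)"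
proof -
  have c: "W * mat_adjoint W \<in> carrier_mat Nt Nt" "E * mat_adjoint W + W * mat_adjoint E \<in> carrier_mat Nt Nt"
     "E * mat_adjoint E \<in> carrier_mat Nt Nt"
    using W E by (auto intro!: carrier_matI)
  have pq: "a div M < 4" "b div M < 4" "a mod M < M" "b mod M < M"
    using ab by (simp_all add: less_mult_imp_div_less mult.commute)
  show ?thesis
    unfolding fisher_eq_block4 gram_add_smult[OF W E] using ab
    by (simp add: index_block4 fisher_blocks_linear[OF c pq] algebra_simps del: of_real_power)
qed

lemma fisher_symmetric:
  assumes "W \<in> carrier_mat Nt n"
  shows "(fisher M L s2s S W)\<^sup>T = fisher M L s2s S W"
proof (rule eq_matI)
  fix a b assume "a < dim_row (fisher M L s2s S W)" "b < dim_col (fisher M L s2s S W)"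
  then have ab: "a < 4*M" "b < 4*M" by simp_all
  have "W * mat_adjoint W \<in> carrier_mat Nt Nt" "mat_adjoint (W * mat_adjoint W) = W * mat_adjoint W"
    using assms by (auto simp: mat_adjoint_mult intro!: carrier_matI)
  moreover have "a div M < 4" "b div M < 4" "a mod M < M" "b mod M < M"
    using ab by (simp_all add: less_mult_imp_div_less mult.commute)
  ultimately show "(fisher M L s2s S W)\<^sup>T $$ (a,b) = fisher M L s2s S W $$ (a,b)"
    using ab by (simp add: fisher_eq_block4 index_block4 fisher_blocks_swap)
qed simp_all

lemma Re_mtrace_Qmat_mult:
  assumes W: "W \<in> carrier_mat Nt n" and X: "X \<in> carrier_mat Nt Nt" and det: "det (fisher M L s2s S W) \<noteq> 0"
  shows "Re (mtrace (Qmat M L s2s S W * X)) =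
    mtrace (minv (fisher M L s2s S W) * ((2 * real L / s2s) \<cdot>\<^sub>m block4 M (fisher_blocks S X))
      * minv (fisher M L s2s S W))"
proof -
  define c0 F0 F1 Phi where "c0 = 2 * real L / s2s" and "F0 = fisher M L s2s S W"
    and "F1 = c0 \<cdot>\<^sub>m block4 M (fisher_blocks S X)" and "Phi = minv F0 * minv F0"
  have F0: "F0 \<in> carrier_mat (4*M) (4*M)" and F1: "F1 \<in> carrier_mat (4*M) (4*M)"
    by (auto simp: F0_def F1_def intro!: carrier_matI)
  have G: "minv F0 \<in> carrier_mat (4*M) (4*M)" "(minv F0)\<^sup>T = minv F0"
    using det_nonzero_minv(1)[OF F0] minv_symmetric[OF F0] fisher_symmetric[OF W] det
    by (simp_all add: F0_def)
  then have Phi: "Phi \<in> carrier_mat (4*M) (4*M)" "Phi\<^sup>T = Phi"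
    using transpose_mult[OF G(1) G(1)] by (simp_all add: Phi_def)
  have "Qmat M L s2s S W * X = complex_of_real c0 \<cdot>\<^sub>m (Q_of_Phi M S Phi * X)"
    using X by (simp add: Qmat_eq_Q_of_Phi c0_def Phi_def F0_def smult_mult_mat_dim)
  then have "Re (mtrace (Qmat M L s2s S W * X)) = c0 * fisher_pairing M S Phi X"
    using X by (simp add: mtrace_smult Re_mtrace_Q_of_Phi_mult)
  also have "\<dots> = mtrace (Phi * F1)"
    using Phi F1 by (simp add: F1_def mult_smult_mat_dim mtrace_smult mtrace_mult_block4_fisher_blocks)
  also have "\<dots> = mtrace (minv F0 * F1 * minv F0)"
    using G(1) F1 mtrace_mult_comm[of "minv F0 * F1" "4*M" "4*M" "minv F0"]
    by (simp add: Phi_def assoc_mult_mat[of "minv F0" "4*M" "4*M" _ "4*M" F1 "4*M"])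
  finally show ?thesis by (simp add: F0_def F1_def c0_def)
qed

lemma mtrace_minv_fisher_has_derivative:
  assumes W: "W \<in> carrier_mat Nt n" and E: "E \<in> carrier_mat Nt n"
    and inv: "invertible_mat (fisher M L s2s S W)"
  shows "((\<lambda>t. mtrace (minv (fisher M L s2s S (W + complex_of_real t \<cdot>\<^sub>m E)))) has_real_derivative
     - Re (mtrace (Qmat M L s2s S W * (E * mat_adjoint W + W * mat_adjoint E)))) (at 0)"
proof -
  define c0 X F0 F1 where "c0 = 2 * real L / s2s" and "X = E * mat_adjoint W + W * mat_adjoint E"
    and "F0 = fisher M L s2s S W" and "F1 = c0 \<cdot>\<^sub>m block4 M (fisher_blocks S X)"
  have X: "X \<in> carrier_mat Nt Nt" using W E by (auto simp: X_def intro!: carrier_matI)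
  have F0: "F0 \<in> carrier_mat (4*M) (4*M)" and F1: "F1 \<in> carrier_mat (4*M) (4*M)"
    by (auto simp: F0_def F1_def intro!: carrier_matI)
  have det: "det F0 \<noteq> 0" using invertible_mat_det_nonzero[OF inv] F0 by (simp add: F0_def)
  define Ft where "Ft t = fisher M L s2s S (W + complex_of_real t \<cdot>\<^sub>m E)" for t
  have Ft0: "Ft 0 = F0"
    unfolding Ft_def F0_def using W E by (intro arg_cong[of _ _ "fisher M L s2s S"] eq_matI) auto
  have "((\<lambda>t. mtrace (minv (Ft t))) has_real_derivative - mtrace (minv (Ft 0) * F1 * minv (Ft 0))) (at 0)"
  proof (rule has_real_derivative_mtrace_minv[OF _ F1])
    show "Ft t \<in> carrier_mat (4*M) (4*M)" for t
      by (auto simp: Ft_def intro!: carrier_matI)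
    show "((\<lambda>t. Ft t $$ (a,b)) has_real_derivative F1 $$ (a,b)) (at 0)" if "a < 4*M" "b < 4*M" for a b
      unfolding Ft_def fisher_add_smult_index[OF W E that] F1_def c0_def X_def
      by (rule quadratic_has_real_derivative_at_0)
  qed (simp add: Ft0 det)
  then have "((\<lambda>t. mtrace (minv (fisher M L s2s S (W + complex_of_real t \<cdot>\<^sub>m E)))) has_real_derivative
      - mtrace (minv F0 * F1 * minv F0)) (at 0)"
    by (simp add: Ft0 Ft_def[symmetric])
  moreover have "mtrace (minv F0 * F1 * minv F0) = Re (mtrace (Qmat M L s2s S W * X))"
    using Re_mtrace_Qmat_mult[OF W X det[unfolded F0_def]] by (simp add: F0_def F1_def c0_def)
  ultimately show ?thesis by (simp add: X_def)
qed

end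

section \<open>Communication rates\<close>

lemma hw_add_smult:
  assumes "H \<in> carrier_mat Nt K" "W \<in> carrier_mat Nt n" "E \<in> carrier_mat Nt n" "k < K" "l < n"
  shows "hw H (W + a \<cdot>\<^sub>m E) k l = hw H W k l + a * hw H E k l"
  using assms by (simp add: hw_def mult_add_distrib_mat_dim mult_smult_mat_dim)

lemma hw_elementary:
  assumes "H \<in> carrier_mat Nt K" "i < Nt" "k < K" "l < n"
  shows "hw H (elementary_mat Nt n i j c) k l = (if l = j then c * cnj (H $$ (i,k)) else 0)"
proof -
  have "hw H (elementary_mat Nt n i j c) k l = (\<Sum>a<Nt. cnj (H $$ (a,k)) * elementary_mat Nt n i j c $$ (a,l))"
    using assms by (simp add: hw_def scalar_prod_def atLeast0LessThan)
  also have "\<dots> = (if l = j then c * cnj (H $$ (i,k)) else 0)"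
    using assms by (cases "l = j") (simp_all add: elementary_mat_def if_distrib[of "\<lambda>x. _ * x"] mult.commute
        cong: if_cong)
  finally show ?thesis .
qed

lemma cmod_power2_line_has_real_derivative:
  "((\<lambda>t. (cmod (z + complex_of_real t * d))\<^sup>2) has_real_derivative 2 * Re (cnj z * d)) (at 0)"
proof -
  have "(\<lambda>t. (cmod (z + complex_of_real t * d))\<^sup>2) =
      (\<lambda>t. (cmod z)\<^sup>2 + t * (2 * Re (cnj z * d)) + t\<^sup>2 * (cmod d)\<^sup>2)"
    by (rule ext) (simp add: cmod_power2 power2_sum power_mult_distrib algebra_simps)
  then show ?thesis using quadratic_has_real_derivative_at_0 by simp
qed

lemma interf_eq_sum:
  assumes "k < K"
  shows "interf K Ns H s2c W k = (\<Sum>l\<in>{..<K+Ns} - {k}. (cmod (hw H W k l))\<^sup>2) + s2c k"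
proof -
  define g where "g l = (cmod (hw H W k l))\<^sup>2" for l
  have "{..<K+Ns} - {k} = ({..<K} - {k}) \<union> {K..<K+Ns}" using assms by auto
  moreover have "({..<K} - {k}) \<inter> {K..<K+Ns} = {}" by auto
  ultimately have "(\<Sum>l\<in>{..<K+Ns} - {k}. g l) = (\<Sum>l\<in>{..<K} - {k}. g l) + (\<Sum>l\<in>{K..<K+Ns}. g l)"
    by (simp add: sum.union_disjoint)
  moreover have "(\<Sum>l\<in>{K..<K+Ns}. g l) = (\<Sum>l<Ns. g (K + l))"
    using sum.shift_bounds_nat_ivl[of g 0 K Ns] by (simp add: add.commute lessThan_atLeast0)
  ultimately show ?thesis by (simp add: interf_def g_def)
qed

lemma interf_pos: "s2c k > 0 \<Longrightarrow> interf K Ns H s2c W k > 0"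
  unfolding interf_def by (intro add_nonneg_pos add_nonneg_nonneg sum_nonneg) auto

lemma interf_has_derivative:
  assumes H: "H \<in> carrier_mat Nt K" and W: "W \<in> carrier_mat Nt (K+Ns)" and E: "E \<in> carrier_mat Nt (K+Ns)"
    and k: "k < K"
  shows "((\<lambda>t. interf K Ns H s2c (W + complex_of_real t \<cdot>\<^sub>m E) k) has_real_derivative
    (\<Sum>l\<in>{..<K+Ns} - {k}. 2 * Re (cnj (hw H W k l) * hw H E k l))) (at 0)"
proof -
  have "interf K Ns H s2c (W + complex_of_real t \<cdot>\<^sub>m E) k =
      (\<Sum>l\<in>{..<K+Ns} - {k}. (cmod (hw H W k l + complex_of_real t * hw H E k l))\<^sup>2) + s2c k" for t
    unfolding interf_eq_sum[OF k] using hw_add_smult[OF H W E k]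
    by (intro arg_cong2[of _ _ _ _ "(+)"] sum.cong) auto
  moreover have "((\<lambda>t. (\<Sum>l\<in>{..<K+Ns} - {k}. (cmod (hw H W k l + complex_of_real t * hw H E k l))\<^sup>2) + s2c k)
      has_real_derivative (\<Sum>l\<in>{..<K+Ns} - {k}. 2 * Re (cnj (hw H W k l) * hw H E k l)) + 0) (at 0)"
    by (intro DERIV_add DERIV_sum cmod_power2_line_has_real_derivative DERIV_const)
  ultimately show ?thesis by simp
qed

text \<open>With \<open>T = I + |h\<^sub>k\<^sup>H w\<^sub>k|\<^sup>2\<close>, the rate is \<open>ln T - ln I\<close>.\<close>
lemma rate_has_derivative:
  assumes H: "H \<in> carrier_mat Nt K" and W: "W \<in> carrier_mat Nt (K+Ns)" and E: "E \<in> carrier_mat Nt (K+Ns)"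
    and k: "k < K" and pos: "s2c k > 0"
    and dI: "((\<lambda>t. interf K Ns H s2c (W + complex_of_real t \<cdot>\<^sub>m E) k) has_real_derivative dI) (at 0)"
  shows "((\<lambda>t. rate K Ns H s2c (W + complex_of_real t \<cdot>\<^sub>m E) k) has_real_derivative
    (dI + 2 * Re (cnj (hw H W k k) * hw H E k k)) / (interf K Ns H s2c W k + (cmod (hw H W k k))\<^sup>2)
      - dI / interf K Ns H s2c W k) (at 0)"
proof -
  define I T where "I t = interf K Ns H s2c (W + complex_of_real t \<cdot>\<^sub>m E) k"
    and "T t = I t + (cmod (hw H (W + complex_of_real t \<cdot>\<^sub>m E) k k))\<^sup>2" for t
  have I: "I t > 0" for t unfolding I_def by (rule interf_pos[of s2c k, OF pos])
  then have T: "T t > 0" for t by (simp add: T_def add_pos_nonneg)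
  have W0: "W + 0 \<cdot>\<^sub>m E = W" using W E by (intro eq_matI) auto
  have "rate K Ns H s2c (W + complex_of_real t \<cdot>\<^sub>m E) k = ln (T t / I t)" for t
    using I[of t] by (simp add: rate_def T_def I_def add_divide_distrib)
  also have "ln (T t / I t) = ln (T t) - ln (I t)" for t
    using I[of t] T[of t] by (simp add: ln_div)
  finally have rate: "(\<lambda>t. rate K Ns H s2c (W + complex_of_real t \<cdot>\<^sub>m E) k) = (\<lambda>t. ln (T t) - ln (I t))"
    by (rule ext)
  have "((\<lambda>t. (cmod (hw H (W + complex_of_real t \<cdot>\<^sub>m E) k k))\<^sup>2) has_real_derivative
      2 * Re (cnj (hw H W k k) * hw H E k k)) (at 0)"
    using hw_add_smult[OF H W E k, of k] k cmod_power2_line_has_real_derivative[of "hw H W k k" "hw H E k k"]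
    by simp
  then have dT: "(T has_real_derivative dI + 2 * Re (cnj (hw H W k k) * hw H E k k)) (at 0)"
    unfolding T_def[abs_def] I_def by (intro DERIV_add dI)
  have dI': "(I has_real_derivative dI) (at 0)" using dI by (simp add: I_def[abs_def])
  show ?thesis
    unfolding rate
    using DERIV_diff[OF DERIV_chain2[OF DERIV_ln_divide[OF T[of 0]] dT]
        DERIV_chain2[OF DERIV_ln_divide[OF I[of 0]] dI']]
    by (simp add: T_def I_def W0)
qed

definition sigma1 :: "nat \<Rightarrow> nat \<Rightarrow> complex mat \<Rightarrow> (nat \<Rightarrow> real) \<Rightarrow> complex mat \<Rightarrow> complex mat" where
  "sigma1 K Ns H s2c W = mat_diag K (\<lambda>k. cnj (hw H W k k) / complex_of_real (interf K Ns H s2c W k))"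

definition sigma2 :: "nat \<Rightarrow> nat \<Rightarrow> complex mat \<Rightarrow> (nat \<Rightarrow> real) \<Rightarrow> complex mat \<Rightarrow> complex mat" where
  "sigma2 K Ns H s2c W = mat_diag K (\<lambda>k. complex_of_real ((cmod (hw H W k k))\<^sup>2 / interf K Ns H s2c W k
     / (interf K Ns H s2c W k + (cmod (hw H W k k))\<^sup>2)))"

lemma sum_rate_elementary_has_derivative:
  assumes H: "H \<in> carrier_mat Nt K" and W: "W \<in> carrier_mat Nt (K+Ns)" and ij: "i < Nt" "j < K+Ns"
    and pos: "\<forall>k<K. s2c k > 0"
  shows "((\<lambda>t. \<Sum>k<K. rate K Ns H s2c (W + complex_of_real t \<cdot>\<^sub>m elementary_mat Nt (K+Ns) i j c) k)
    has_real_derivative (\<Sum>k<K.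
       2 * Re (cnj (hw H W k j) * (c * cnj (H $$ (i,k)))) / (interf K Ns H s2c W k + (cmod (hw H W k k))\<^sup>2)
       - (if j = k then 0 else 2 * Re (cnj (hw H W k j) * (c * cnj (H $$ (i,k))))) / interf K Ns H s2c W k))
    (at 0)"
proof (rule DERIV_sum)
  fix k assume "k \<in> {..<K}"
  then have k: "k < K" by simp
  define E D where "E = elementary_mat Nt (K+Ns) i j c"
    and "D = 2 * Re (cnj (hw H W k j) * (c * cnj (H $$ (i,k))))"
  have E: "E \<in> carrier_mat Nt (K+Ns)" by (simp add: E_def)
  have hwE: "hw H E k l = (if l = j then c * cnj (H $$ (i,k)) else 0)" if "l < K+Ns" for l
    unfolding E_def using hw_elementary[OF H ij(1) k that] .
  have "(\<Sum>l\<in>{..<K+Ns} - {k}. 2 * Re (cnj (hw H W k l) * hw H E k l)) =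
      (\<Sum>l\<in>{..<K+Ns} - {k}. if l = j then D else 0)"
    by (intro sum.cong refl) (simp add: hwE D_def)
  also have "\<dots> = (if j = k then 0 else D)" using ij(2) by (simp add: sum.delta')
  finally have "((\<lambda>t. interf K Ns H s2c (W + complex_of_real t \<cdot>\<^sub>m E) k) has_real_derivative
      (if j = k then 0 else D)) (at 0)"
    using interf_has_derivative[OF H W E k] by simp
  from rate_has_derivative[OF H W E k _ this] pos k
  show "((\<lambda>t. rate K Ns H s2c (W + complex_of_real t \<cdot>\<^sub>m E) k) has_real_derivative
      D / (interf K Ns H s2c W k + (cmod (hw H W k k))\<^sup>2) - (if j = k then 0 else D) / interf K Ns H s2c W k)
      (at 0)"
    using k hwE[of k] by (cases "j = k") (simp_all add: D_def)
qed

lemma index_mult_adjoint_mat_diag: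
  assumes "H \<in> carrier_mat n K" "i < n" "j < K"
  shows "(H * mat_adjoint (mat_diag K f)) $$ (i,j) = H $$ (i,j) * cnj (f j)"
  using assms by (simp add: mat_adjoint_mat_diag mat_diag_mult_right)

lemma index_mult_mat_diag_gram:
  assumes H: "H \<in> carrier_mat n K" and W: "W \<in> carrier_mat n m" and "i < n" "j < m"
  shows "(H * mat_diag K f * mat_adjoint H * W) $$ (i,j) = (\<Sum>k<K. H $$ (i,k) * f k * hw H W k j)"
proof -
  have "H * mat_diag K f * mat_adjoint H * W = (H * mat_diag K f) * (mat_adjoint H * W)"
    using H W by (simp add: assoc_mult_mat_dim)
  then show ?thesis
    using assms by (simp add: mat_diag_mult_right scalar_prod_def atLeast0LessThan hw_def)
qed

lemma sum_rate_derivative_eq: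
  assumes H: "H \<in> carrier_mat Nt K" and W: "W \<in> carrier_mat Nt (K+Ns)" and ij: "i < Nt" "j < K+Ns"
    and pos: "\<forall>k<K. s2c k > 0"
  shows "(\<Sum>k<K.
       2 * Re (cnj (hw H W k j) * (c * cnj (H $$ (i,k)))) / (interf K Ns H s2c W k + (cmod (hw H W k k))\<^sup>2)
       - (if j = k then 0 else 2 * Re (cnj (hw H W k j) * (c * cnj (H $$ (i,k))))) / interf K Ns H s2c W k) =
    2 * Re (cnj c * (if j < K then (H * mat_adjoint (sigma1 K Ns H s2c W)) $$ (i,j) else 0))
    - 2 * Re (cnj c * (H * sigma2 K Ns H s2c W * mat_adjoint H * W) $$ (i,j))"
proof -
  define I N D beta where "I k = interf K Ns H s2c W k" and "N k = (cmod (hw H W k k))\<^sup>2"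
    and "D k = 2 * Re (cnj (hw H W k j) * (c * cnj (H $$ (i,k))))"
    and "beta k = N k / I k / (I k + N k)" for k
  have summand:
    "D k / (I k + N k) - (if j = k then 0 else D k) / I k = (if k = j then D k / I k else 0) - beta k * D k"
    if "k < K" for k
  proof -
    have "d / t = d / i - (t - i) / i / t * d" if "i \<noteq> 0" "t \<noteq> 0" for d t i :: real
      using that by (simp add: field_simps)
    moreover have "I k > 0" "I k + N k > 0" using pos that interf_pos by (auto simp: I_def N_def add_pos_nonneg)
    ultimately have "D k / (I k + N k) = D k / I k - beta k * D k"
      unfolding beta_def by (metis add_diff_cancel_left' less_irrefl)
    then show ?thesis by auto
  qed
  have sum: "(\<Sum>k<K. D k / (I k + N k) - (if j = k then 0 else D k) / I k) =
      (if j < K then D j / I j else 0) - (\<Sum>k<K. beta k * D k)"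
    by (simp add: summand sum_subtractf sum.delta)
  have sigma1: "2 * Re (cnj c * (if j < K then (H * mat_adjoint (sigma1 K Ns H s2c W)) $$ (i,j) else 0)) =
      (if j < K then D j / I j else 0)"
    using index_mult_adjoint_mat_diag[OF H ij(1)]
    by (simp add: sigma1_def I_def D_def add_divide_distrib diff_divide_distrib algebra_simps)
  have sigma2: "2 * Re (cnj c * (H * sigma2 K Ns H s2c W * mat_adjoint H * W) $$ (i,j)) = (\<Sum>k<K. beta k * D k)"
  proof -
    have "sigma2 K Ns H s2c W = mat_diag K (\<lambda>k. complex_of_real (beta k))"
      by (simp add: sigma2_def beta_def I_def N_def)
    then show ?thesis
      using index_mult_mat_diag_gram[OF H W ij] by (simp add: D_def sum_distrib_left algebra_simps)
  qed
  show ?thesis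
    using sum unfolding sigma1 sigma2 by (simp only: I_def N_def D_def)
qed

context sensing_model
begin

lemma Qmat_dims [simp]: "dim_row (Qmat M L s2s S W) = Nt" "dim_col (Qmat M L s2s S W) = Nt"
  by (simp_all add: Qmat_eq_Q_of_Phi)

lemma grad_formula_index:
  assumes H: "H \<in> carrier_mat Nt K" and W: "W \<in> carrier_mat Nt (K+Ns)" and ij: "i < Nt" "j < K+Ns"
  shows "grad_formula Nt K Ns M L H s2c s2s S dc ds W $$ (i,j) =
    2 * complex_of_real dc * (if j < K then (H * mat_adjoint (sigma1 K Ns H s2c W)) $$ (i,j) else 0)
    + complex_of_real ds * ((Qmat M L s2s S W + mat_adjoint (Qmat M L s2s S W)) * W) $$ (i,j)
    - 2 * complex_of_real dc * (H * sigma2 K Ns H s2c W * mat_adjoint H * W) $$ (i,j)"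
  using H W ij
  by (simp add: grad_formula_def sigma1_def sigma2_def Let_def add_mult_distrib_mat_dim
      minus_mult_distrib_mat_dim smult_mult_mat_dim algebra_simps)

lemma objective_has_directional_derivative:
  assumes H: "H \<in> carrier_mat Nt K" and pos: "\<forall>k<K. s2c k > 0" and W: "W \<in> carrier_mat Nt (K+Ns)"
    and inv: "invertible_mat (fisher M L s2s S W)" and ij: "i < Nt" "j < K+Ns"
  shows "((\<lambda>t. objective K Ns M L H s2c s2s S dc ds (pert W i j (complex_of_real t * c))) has_real_derivative
    Re (cnj c * grad_formula Nt K Ns M L H s2c s2s S dc ds W $$ (i,j))) (at 0)"
proof -
  define E Q where "E = elementary_mat Nt (K+Ns) i j c" and "Q = Qmat M L s2s S W"
  have E: "E \<in> carrier_mat Nt (K+Ns)" by (simp add: E_def)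
  have "(\<lambda>t. objective K Ns M L H s2c s2s S dc ds (pert W i j (complex_of_real t * c))) =
      (\<lambda>t. dc * (\<Sum>k<K. rate K Ns H s2c (W + complex_of_real t \<cdot>\<^sub>m E) k)
        - ds * mtrace (minv (fisher M L s2s S (W + complex_of_real t \<cdot>\<^sub>m E))))"
    using W ij by (simp add: pert_eq_add_elementary objective_def E_def)
  moreover have "((\<lambda>t. dc * (\<Sum>k<K. rate K Ns H s2c (W + complex_of_real t \<cdot>\<^sub>m E) k)
        - ds * mtrace (minv (fisher M L s2s S (W + complex_of_real t \<cdot>\<^sub>m E)))) has_real_derivative
      dc * (2 * Re (cnj c * (if j < K then (H * mat_adjoint (sigma1 K Ns H s2c W)) $$ (i,j) else 0))
        - 2 * Re (cnj c * (H * sigma2 K Ns H s2c W * mat_adjoint H * W) $$ (i,j)))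
      - ds * - Re (mtrace (Q * (E * mat_adjoint W + W * mat_adjoint E)))) (at 0)"
    using sum_rate_elementary_has_derivative[OF H W ij pos, of c] sum_rate_derivative_eq[OF H W ij pos, of c]
      mtrace_minv_fisher_has_derivative[OF W E inv]
    by (intro DERIV_diff DERIV_cmult) (simp_all add: E_def Q_def)
  moreover have "Re (mtrace (Q * (E * mat_adjoint W + W * mat_adjoint E))) =
      Re (cnj c * ((Q + mat_adjoint Q) * W) $$ (i,j))"
    unfolding E_def Q_def using W ij by (intro Re_mtrace_mult_elementary_perturbation) auto
  ultimately show ?thesis
    using H W ij by (simp add: grad_formula_index Q_def algebra_simps)
qed

end

theorem proposition3:
  fixes Nt Nr K M L Ns :: nat
    and H Wt :: "complex mat"
    and s2c :: "nat \<Rightarrow> real" and s2s dc ds :: real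
    and a b :: "real \<Rightarrow> real \<Rightarrow> nat \<Rightarrow> complex"
    and th ph :: "nat \<Rightarrow> real" and al :: "nat \<Rightarrow> complex"
  assumes "Nt > 0" "Nr > 0" "K > 0" "M > 0" "L > 0"
    and "H \<in> carrier_mat Nt K"
    and "\<forall>k<K. s2c k > 0" and "s2s > 0" and "dc \<ge> 0" and "ds \<ge> 0"
    and "\<forall>i<Nt. \<forall>p. (\<lambda>q. a (fst q) (snd q) i) differentiable (at p)"
    and "\<forall>i<Nr. \<forall>p. (\<lambda>q. b (fst q) (snd q) i) differentiable (at p)"
    and "Wt \<in> carrier_mat Nt (K + Ns)"
    and "invertible_mat (fisher M L s2s (mk_sens Nt Nr M a b th ph al) Wt)"
  shows "has_gradient (objective K Ns M L H s2c s2s (mk_sens Nt Nr M a b th ph al) dc ds) Wt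
           (grad_formula Nt K Ns M L H s2c s2s (mk_sens Nt Nr M a b th ph al) dc ds Wt)"
proof -
  define S where "S = mk_sens Nt Nr M a b th ph al"
  interpret sensing_model Nt Nr M S by unfold_locales (simp_all add: S_def mk_sens_def)
  show ?thesis
    unfolding S_def[symmetric]
  proof (rule has_gradientI)
    show "grad_formula Nt K Ns M L H s2c s2s S dc ds Wt \<in> carrier_mat (dim_row Wt) (dim_col Wt)"
      using assms(6,13) by (intro carrier_matI) (simp_all add: grad_formula_def Let_def)
    fix i j c assume "i < dim_row Wt" "j < dim_col Wt"
    then show "((\<lambda>t. objective K Ns M L H s2c s2s S dc ds (pert Wt i j (complex_of_real t * c)))
        has_real_derivative Re (cnj c * grad_formula Nt K Ns M L H s2c s2s S dc ds Wt $$ (i,j))) (at 0)"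
      using assms(6,7,13,14) by (intro objective_has_directional_derivative) (simp_all add: S_def)
  qed
qed

end
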